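(* Let $p$ be an odd prime and $r\ge3$ with $p\nmid r$. Let $\mathcal{M}_1,\dots,\mathcal{M}_m,\mathcal{N}_1,\dots,\mathcal{N}_n$ be irreducible rotary augmented PX maps of length $r$ such that $\mathcal{M}_i\not\cong\mathcal{M}_j$ and $\mathcal{N}_i\not\cong\mathcal{N}_j$ for $i\ne j$. Then $\mathcal{M}_1\times\cdots\times\mathcal{M}_m\cong\mathcal{N}_1\times\cdots\times\mathcal{N}_n$ if and only if $m=n$ and there is a permutation $\sigma$ of $\{1,\dots,n\}$ with $\mathcal{M}_i\cong\mathcal{N}_{\sigma(i)}$ for all $i$.
   Context: A map is a 2-cell embedding of a connected graph (multiple edges allowed, no loops) in a closed orientable surface; it is rotary if its orientation-preserving automorphism group $G$ is arc-transitive, in which case it is isomorphic to $\mathsf{RotaMap}(G,\rho,\tau)$ for some $\rho,\tau$ with $G=\langle\rho,\tau\rangle$, $|\tau|=2$; here $\mathsf{RotaMap}(G,\rho,\tau)$ has vertices, edges, faces the left cosets of $\langle\rho\rangle,\langle\tau\rangle,\langle\rho\tau\rangle$, incidence being nonempty intersection. Direct product: for $\mathcal{M}_i=\mathsf{RotaMap}(G_i,\rho_i,\tau_i)$ and $H=\langle(\rho_1,\dots,\rho_n),(\tau_1,\dots,\tau_n)\rangle\le\prod G_i$, $\prod\mathcal{M}_i=\mathsf{RotaMap}(H,(\rho_i)_i,(\tau_i)_i)$. Augmented PX graph of length $r$: for $s\ge1$, the graph with vertex set $\mathbb{Z}_r\times\mathbb{Z}_p^s$ and edges $\{(i,x_0,\dots,x_{s-1}),(i+1,x_1,\dots,x_s)\}$;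 the cycle of length $r$ with $p$ parallel edges between adjacent vertices; or the cycle $\mathrm{C}_{pr}$. An augmented PX map of length $r$ is a map with such an underlying graph; a rotary one is irreducible if its arc-regular orientation-preserving automorphism group is isomorphic to $\mathbb{Z}_p^d\rtimes_\psi\mathrm{D}_{2r}$ with $\psi$ irreducible over $\mathbb{F}_p$. *)

theory Defs
  imports "HOL-Algebra.Algebra" "HOL-Computational_Algebra.Primes"
begin

text \<open>A rotary map is given by a presentation (G, rho, tau); the map RotaMap(G,rho,tau).\<close>
type_synonym 'a rmap = "'a monoid \<times> 'a \<times> 'a"

text \<open>(G, rho, tau) presents a rotary map: G finite group generated by rho, tau,
  tau an involution, and no loops (tau not in the vertex stabiliser generated by rho).\<close>
definition rotary_datum :: "'a rmap \<Rightarrow> bool" where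
  "rotary_datum M = (case M of (G, \<rho>, \<tau>) \<Rightarrow>
     group G \<and> finite (carrier G) \<and> \<rho> \<in> carrier G \<and> \<tau> \<in> carrier G \<and>
     generate G {\<rho>, \<tau>} = carrier G \<and> \<tau> \<noteq> \<one>\<^bsub>G\<^esub> \<and> \<tau> \<otimes>\<^bsub>G\<^esub> \<tau> = \<one>\<^bsub>G\<^esub> \<and>
     \<tau> \<notin> generate G {\<rho>})"

text \<open>Oriented (dart) maps: darts, rotation R, edge involution L.
  Isomorphism = orientation-preserving map isomorphism.\<close>
type_synonym 'a omap = "'a set \<times> ('a \<Rightarrow> 'a) \<times> ('a \<Rightarrow> 'a)"

definition omap_iso :: "'a omap \<Rightarrow> 'b omap \<Rightarrow> bool" where
  "omap_iso A B = (case A of (D, R, L) \<Rightarrow> case B of (D', R', L') \<Rightarrow>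
     (\<exists>f. bij_betw f D D' \<and> (\<forall>x\<in>D. f (R x) = R' (f x) \<and> f (L x) = L' (f x))))"

text \<open>RotaMap(G,rho,tau): arcs are the elements of G; arc g lies at vertex g<rho> on edge g<tau>;
  the next arc around the vertex is g rho, the reverse arc is g tau.\<close>
definition RotaMap :: "'a rmap \<Rightarrow> 'a omap" where
  "RotaMap M = (case M of (G, \<rho>, \<tau>) \<Rightarrow>
     (carrier G, (\<lambda>g. g \<otimes>\<^bsub>G\<^esub> \<rho>), (\<lambda>g. g \<otimes>\<^bsub>G\<^esub> \<tau>)))"

definition rmap_iso :: "'a rmap \<Rightarrow> 'b rmap \<Rightarrow> bool" where
  "rmap_iso M N = omap_iso (RotaMap M) (RotaMap N)"

type_synonym ('v, 'e) mgraph = "'v set \<times> 'e set \<times> ('e \<Rightarrow> 'v set)"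

definition mgraph_iso :: "('v, 'e) mgraph \<Rightarrow> ('w, 'f) mgraph \<Rightarrow> bool" where
  "mgraph_iso A B = (case A of (V, E, en) \<Rightarrow> case B of (V', E', en') \<Rightarrow>
     (\<exists>\<phi> \<psi>. bij_betw \<phi> V V' \<and> bij_betw \<psi> E E' \<and> (\<forall>e\<in>E. en' (\<psi> e) = \<phi> ` en e)))"

definition ugraph :: "'a rmap \<Rightarrow> ('a set, 'a set) mgraph" where
  "ugraph M = (case M of (G, \<rho>, \<tau>) \<Rightarrow>
     (let V = (\<Union>g\<in>carrier G. {g <#\<^bsub>G\<^esub> generate G {\<rho>}});
          E = (\<Union>g\<in>carrier G. {g <#\<^bsub>G\<^esub> generate G {\<tau>}})
      in (V, E, (\<lambda>e. {v \<in> V. v \<inter> e \<noteq> {}}))))"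

text \<open>Augmented PX graph with parameters p, r, s (Z_r as {0..<r}, Z_p^s as lists of
  length s with entries < p).
  For s = 0 this is the r-cycle with p parallel edges between adjacent vertices.\<close>
definition PX_graph :: "nat \<Rightarrow> nat \<Rightarrow> nat \<Rightarrow> (nat \<times> nat list, nat \<times> nat list) mgraph" where
  "PX_graph p r s =
     ({(i, xs). i < r \<and> length xs = s \<and> set xs \<subseteq> {..<p}},
      {(i, xs). i < r \<and> length xs = Suc s \<and> set xs \<subseteq> {..<p}},
      (\<lambda>(i, xs). {(i, take s xs), (Suc i mod r, drop 1 xs)}))"

definition cycle_graph :: "nat \<Rightarrow> (nat, nat) mgraph" where
  "cycle_graph k = ({..<k}, {..<k}, (\<lambda>j. {j, Suc j mod k}))"

definition augmented_PX_map :: "nat \<Rightarrow> nat \<Rightarrow> 'a rmap \<Rightarrow> bool" where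
  "augmented_PX_map p r M =
     (rotary_datum M \<and>
      ((\<exists>s. mgraph_iso (ugraph M) (PX_graph p r s)) \<or> mgraph_iso (ugraph M) (cycle_graph (p * r))))"

text \<open>Dihedral group of order 2r: (i,False) = x^i, (i,True) = x^i y.\<close>
definition dihedral_group :: "nat \<Rightarrow> (nat \<times> bool) monoid" where
  "dihedral_group r =
     \<lparr>carrier = {..<r} \<times> UNIV,
      monoid.mult = (\<lambda>(i, s) (j, t). ((if s then i + (r - j) else i + j) mod r, s \<noteq> t)),
      one = (0, False)\<rparr>"

text \<open>G is isomorphic to Z_p^d semidirect_psi D_2r with psi irreducible over F_p (d >= 1):
  internally, G = K D with K an elementary abelian p-subgroup normal in G, D a complement
  isomorphic to D_2r, and K has no G-invariant subgroup (= F_p D-submodule) other than 1, K.\<close>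
definition irreducible_PX_group :: "nat \<Rightarrow> nat \<Rightarrow> 'a monoid \<Rightarrow> bool" where
  "irreducible_PX_group p r G =
     (\<exists>K D. K \<lhd> G \<and> K \<noteq> {\<one>\<^bsub>G\<^esub>} \<and>
        (\<forall>x\<in>K. \<forall>y\<in>K. x \<otimes>\<^bsub>G\<^esub> y = y \<otimes>\<^bsub>G\<^esub> x) \<and>
        (\<forall>x\<in>K. x [^]\<^bsub>G\<^esub> p = \<one>\<^bsub>G\<^esub>) \<and>
        subgroup D G \<and> K \<inter> D = {\<one>\<^bsub>G\<^esub>} \<and> K <#>\<^bsub>G\<^esub> D = carrier G \<and>
        G\<lparr>carrier := D\<rparr> \<cong> dihedral_group r \<and>
        (\<forall>L. L \<lhd> G \<longrightarrow> L \<subseteq> K \<longrightarrow> L = {\<one>\<^bsub>G\<^esub>} \<or> L = K))"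

definition irreducible_rotary_augmented_PX_map :: "nat \<Rightarrow> nat \<Rightarrow> 'a rmap \<Rightarrow> bool" where
  "irreducible_rotary_augmented_PX_map p r M =
     (augmented_PX_map p r M \<and> irreducible_PX_group p r (fst M))"

definition rmap_prod :: "nat \<Rightarrow> (nat \<Rightarrow> 'a rmap) \<Rightarrow> (nat \<Rightarrow> 'a) rmap" where
  "rmap_prod m M =
     (let P = product_group {..<m} (\<lambda>i. fst (M i));
          \<rho> = (\<lambda>i\<in>{..<m}. fst (snd (M i)));
          \<tau> = (\<lambda>i\<in>{..<m}. snd (snd (M i)))
      in (P\<lparr>carrier := generate P {\<rho>, \<tau>}\<rparr>, \<rho>, \<tau>))"

end

(*
  A rotary map RotaMap(G, rho, tau) is determined up to isomorphism by its relators, the words in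
  rho and tau that evaluate to 1, and the relators of a direct product are the intersection of the
  relators of the factors. The theorem therefore reduces to a primality property: if the relators
  of an irreducible PX map Q contain the intersection of the relators of irreducible PX maps
  M_1, ..., M_m, they are the relators of some M_k.

  Filter the words whose values lie in all the kernels K_i = Z_p^d by the number of leading factors
  in which they vanish. At the first step where these words stop being relators of Q, sending the
  value of a word in G_k to its value in G_Q is a well-defined, rho- and tau-equivariant isomorphism
  K_k -> K_Q, by irreducibility (p does not divide 2r, so p-th powers of words land in K_Q).
  Such an isomorphism forces equal relators: in the subgroup of G_k x G_Q generated by the paired
  generators, the submodule generated by rho^2 or by (rho tau)^r inside K_k x K_Q is normal, has
  index at most 2r, and is the graph of the isomorphism on its image, so projection to G_k is
  injective.
*)
theory Submission
  imports Defs
begin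

section \<open>Words and relators\<close>

text \<open>A letter \<open>(t, i)\<close> stands for \<open>\<tau>\<close> if \<open>t\<close> holds and for \<open>\<rho>\<close> otherwise, inverted if \<open>i\<close> holds.\<close>

type_synonym word = "(bool \<times> bool) list"

definition letter :: "('a, 'm) monoid_scheme \<Rightarrow> 'a \<Rightarrow> 'a \<Rightarrow> bool \<times> bool \<Rightarrow> 'a" where
  "letter G a b c =
     (if fst c then (if snd c then inv\<^bsub>G\<^esub> b else b) else (if snd c then inv\<^bsub>G\<^esub> a else a))"

fun eval_word :: "('a, 'm) monoid_scheme \<Rightarrow> 'a \<Rightarrow> 'a \<Rightarrow> word \<Rightarrow> 'a" where
  "eval_word G a b [] = \<one>\<^bsub>G\<^esub>"
| "eval_word G a b (c # w) = letter G a b c \<otimes>\<^bsub>G\<^esub> eval_word G a b w"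

definition inv_word :: "word \<Rightarrow> word" where
  "inv_word w = rev (map (\<lambda>c. (fst c, \<not> snd c)) w)"

definition relators :: "('a, 'm) monoid_scheme \<Rightarrow> 'a \<Rightarrow> 'a \<Rightarrow> word set" where
  "relators G a b = {w. eval_word G a b w = \<one>\<^bsub>G\<^esub>}"

context group
begin

lemma letter_closed: "a \<in> carrier G \<Longrightarrow> b \<in> carrier G \<Longrightarrow> letter G a b c \<in> carrier G"
  by (auto simp: letter_def)

lemma eval_word_closed: "a \<in> carrier G \<Longrightarrow> b \<in> carrier G \<Longrightarrow> eval_word G a b w \<in> carrier G"
  by (induction w) (auto simp: letter_closed)

lemma eval_word_append:
  "a \<in> carrier G \<Longrightarrow> b \<in> carrier G \<Longrightarrow>
     eval_word G a b (w1 @ w2) = eval_word G a b w1 \<otimes> eval_word G a b w2"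
  by (induction w1) (auto simp: letter_closed eval_word_closed m_assoc)

lemma eval_inv_word:
  assumes "a \<in> carrier G" "b \<in> carrier G"
  shows "eval_word G a b (inv_word w) = inv (eval_word G a b w)"
proof (induction w)
  case Nil
  then show ?case by (simp add: inv_word_def)
next
  case (Cons c w)
  have "eval_word G a b (inv_word (c # w)) = eval_word G a b (inv_word w @ [(fst c, \<not> snd c)])"
    by (simp add: inv_word_def)
  also have "\<dots> = inv (eval_word G a b w) \<otimes> inv (letter G a b c)"
    using Cons assms by (simp add: eval_word_append letter_closed) (simp add: letter_def)
  also have "\<dots> = inv (letter G a b c \<otimes> eval_word G a b w)"
    using assms by (simp add: inv_mult_group letter_closed eval_word_closed)
  finally show ?case by simp
qed

lemma eval_word_eq_iff:
  assumes "a \<in> carrier G" "b \<in> carrier G"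
  shows "eval_word G a b w1 = eval_word G a b w2 \<longleftrightarrow> eval_word G a b (inv_word w2 @ w1) = \<one>"
  using assms by (simp add: eval_word_append eval_inv_word eval_word_closed)
    (metis eval_word_closed inv_closed inv_inv l_inv r_one group.inv_equality is_group)

lemma eval_word_concat_replicate:
  "a \<in> carrier G \<Longrightarrow> b \<in> carrier G \<Longrightarrow>
     eval_word G a b (concat (replicate n w)) = eval_word G a b w [^] n"
  by (induction n)
    (simp_all add: eval_word_append eval_word_closed nat_pow_Suc2[symmetric] del: nat_pow_Suc)

lemma generate_eq_range_eval_word:
  assumes ab: "a \<in> carrier G" "b \<in> carrier G"
  shows "generate G {a, b} = range (eval_word G a b)"
proof
  have gen_letter: "letter G a b c \<in> range (eval_word G a b)" for c
    using ab r_one letter_closed eval_word.simps by (metis rangeI)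
  show "generate G {a, b} \<subseteq> range (eval_word G a b)"
  proof
    fix x assume "x \<in> generate G {a, b}"
    then show "x \<in> range (eval_word G a b)"
    proof induction
      case one
      then show ?case by (metis eval_word.simps(1) rangeI)
    next
      case (incl h)
      then show ?case using gen_letter[of "(True, False)"] gen_letter[of "(False, False)"]
        by (auto simp: letter_def)
    next
      case (inv h)
      then show ?case using gen_letter[of "(True, True)"] gen_letter[of "(False, True)"]
        by (auto simp: letter_def)
    next
      case (eng h1 h2)
      then obtain w1 w2 where "h1 = eval_word G a b w1" "h2 = eval_word G a b w2" by auto
      then have "h1 \<otimes> h2 = eval_word G a b (w1 @ w2)" using ab by (simp add: eval_word_append)
      then show ?case by simp
    qed
  qed
  have "eval_word G a b w \<in> generate G {a, b}" for w
  proof (induction w)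
    case Nil
    then show ?case by (simp add: generate.one)
  next
    case (Cons c w)
    have "letter G a b c \<in> generate G {a, b}"
      by (auto simp: letter_def intro: generate.incl generate.inv)
    then show ?case using Cons by (simp add: generate.eng)
  qed
  then show "range (eval_word G a b) \<subseteq> generate G {a, b}" by auto
qed

lemma eval_word_subgroup:
  assumes "subgroup H G" "a \<in> H" "b \<in> H"
  shows "eval_word (G\<lparr>carrier := H\<rparr>) a b w = eval_word G a b w"
proof (induction w)
  case (Cons c w)
  have "letter (G\<lparr>carrier := H\<rparr>) a b c = letter G a b c"
    using assms m_inv_consistent by (auto simp: letter_def)
  then show ?case using Cons by simp
qed simp

end

lemma hom_eval_word:
  assumes "group G" "group G'" "h \<in> hom G G'" "a \<in> carrier G" "b \<in> carrier G"
  shows "h (eval_word G a b w) = eval_word G' (h a) (h b) w"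
proof -
  interpret group_hom G G' h
    using assms by (simp add: group_hom.intro group_hom_axioms.intro)
  show ?thesis
  proof (induction w)
    case Nil
    then show ?case by simp
  next
    case (Cons c w)
    have "h (letter G a b c) = letter G' (h a) (h b) c"
      using assms by (auto simp: letter_def)
    then show ?case using Cons assms by (simp add: G.letter_closed G.eval_word_closed)
  qed
qed

lemma eval_word_product_group:
  assumes "\<And>i. i \<in> I \<Longrightarrow> group (G i)"
    and "a \<in> (\<Pi>\<^sub>E i\<in>I. carrier (G i))" "b \<in> (\<Pi>\<^sub>E i\<in>I. carrier (G i))"
  shows "eval_word (product_group I G) a b w = (\<lambda>i\<in>I. eval_word (G i) (a i) (b i) w)"
proof (induction w)
  case (Cons c w)
  have "letter (product_group I G) a b c = (\<lambda>i\<in>I. letter (G i) (a i) (b i) c)"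
    using assms by (auto simp: letter_def)
  then show ?case using Cons by (auto simp: fun_eq_iff)
qed simp

lemma eval_word_DirProd:
  assumes "group G1" "group G2" "a1 \<in> carrier G1" "b1 \<in> carrier G1" "a2 \<in> carrier G2" "b2 \<in> carrier G2"
  shows "eval_word (G1 \<times>\<times> G2) (a1, a2) (b1, b2) w = (eval_word G1 a1 b1 w, eval_word G2 a2 b2 w)"
proof (induction w)
  case (Cons c w)
  have "letter (G1 \<times>\<times> G2) (a1, a2) (b1, b2) c = (letter G1 a1 b1 c, letter G2 a2 b2 c)"
    using assms by (auto simp: letter_def)
  then show ?case using Cons by simp
qed simp

section \<open>Rotary maps are determined by their relators\<close>

definition rmap_generated :: "'a rmap \<Rightarrow> bool" where
  "rmap_generated M \<longleftrightarrow> (case M of (G, \<rho>, \<tau>) \<Rightarrow>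
     group G \<and> \<rho> \<in> carrier G \<and> \<tau> \<in> carrier G \<and> carrier G = range (eval_word G \<rho> \<tau>))"

definition rmap_relators :: "'a rmap \<Rightarrow> word set" where
  "rmap_relators M = (case M of (G, \<rho>, \<tau>) \<Rightarrow> relators G \<rho> \<tau>)"

lemma rotary_datum_imp_rmap_generated:
  assumes "rotary_datum (G, \<rho>, \<tau>)"
  shows "rmap_generated (G, \<rho>, \<tau>)"
proof -
  have "group G" "\<rho> \<in> carrier G" "\<tau> \<in> carrier G" "generate G {\<rho>, \<tau>} = carrier G"
    using assms by (simp_all add: rotary_datum_def)
  then show ?thesis by (simp add: rmap_generated_def group.generate_eq_range_eval_word)
qed

lemma intertwiner_eval_word:
  assumes G: "group G" "a \<in> carrier G" "b \<in> carrier G"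
    and G': "group G'" "a' \<in> carrier G'" "b' \<in> carrier G'"
    and f: "f \<in> carrier G \<rightarrow> carrier G'"
    and fa: "\<And>x. x \<in> carrier G \<Longrightarrow> f (x \<otimes>\<^bsub>G\<^esub> a) = f x \<otimes>\<^bsub>G'\<^esub> a'"
    and fb: "\<And>x. x \<in> carrier G \<Longrightarrow> f (x \<otimes>\<^bsub>G\<^esub> b) = f x \<otimes>\<^bsub>G'\<^esub> b'"
    and x: "x \<in> carrier G"
  shows "f (x \<otimes>\<^bsub>G\<^esub> eval_word G a b w) = f x \<otimes>\<^bsub>G'\<^esub> eval_word G' a' b' w"
proof -
  interpret G: group G by (rule G(1))
  interpret G': group G' by (rule G'(1))
  have f_inv: "f (y \<otimes>\<^bsub>G\<^esub> inv\<^bsub>G\<^esub> g) = f y \<otimes>\<^bsub>G'\<^esub> inv\<^bsub>G'\<^esub> g'"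
    if "g \<in> carrier G" "g' \<in> carrier G'" "y \<in> carrier G"
      and fg: "f (y \<otimes>\<^bsub>G\<^esub> inv\<^bsub>G\<^esub> g \<otimes>\<^bsub>G\<^esub> g) = f (y \<otimes>\<^bsub>G\<^esub> inv\<^bsub>G\<^esub> g) \<otimes>\<^bsub>G'\<^esub> g'" for y g g'
  proof -
    have "f (y \<otimes>\<^bsub>G\<^esub> inv\<^bsub>G\<^esub> g) \<in> carrier G'" using f that by (auto simp: Pi_iff)
    then show ?thesis using fg that by (simp add: G.m_assoc G'.m_assoc)
  qed
  have f_letter: "f (y \<otimes>\<^bsub>G\<^esub> letter G a b c) = f y \<otimes>\<^bsub>G'\<^esub> letter G' a' b' c"
    if "y \<in> carrier G" for y c
    using that G G' fa fb f_inv[of a a' y] f_inv[of b b' y] by (auto simp: letter_def)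
  show ?thesis
    using x
  proof (induction w arbitrary: x)
    case Nil
    then show ?case using f by (simp add: Pi_iff)
  next
    case (Cons c w)
    have "f (x \<otimes>\<^bsub>G\<^esub> eval_word G a b (c # w)) = f ((x \<otimes>\<^bsub>G\<^esub> letter G a b c) \<otimes>\<^bsub>G\<^esub> eval_word G a b w)"
      using Cons G by (simp add: G.m_assoc G.letter_closed G.eval_word_closed)
    also have "\<dots> = f x \<otimes>\<^bsub>G'\<^esub> letter G' a' b' c \<otimes>\<^bsub>G'\<^esub> eval_word G' a' b' w"
      using Cons G f_letter by (simp add: G.letter_closed)
    also have "\<dots> = f x \<otimes>\<^bsub>G'\<^esub> eval_word G' a' b' (c # w)"
      using Cons.prems f G' by (simp add: Pi_iff G'.m_assoc G'.letter_closed G'.eval_word_closed)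
    finally show ?case .
  qed
qed

lemma rmap_iso_imp_relators_eq:
  assumes gen: "rmap_generated (G, a, b)" "rmap_generated (G', a', b')"
    and iso: "rmap_iso (G, a, b) (G', a', b')"
  shows "relators G a b = relators G' a' b'"
proof -
  interpret G: group G using gen by (simp add: rmap_generated_def)
  interpret G': group G' using gen by (simp add: rmap_generated_def)
  have ab: "a \<in> carrier G" "b \<in> carrier G" "a' \<in> carrier G'" "b' \<in> carrier G'"
    using gen by (auto simp: rmap_generated_def)
  obtain f where bij: "bij_betw f (carrier G) (carrier G')"
    and fa: "\<And>x. x \<in> carrier G \<Longrightarrow> f (x \<otimes>\<^bsub>G\<^esub> a) = f x \<otimes>\<^bsub>G'\<^esub> a'"
    and fb: "\<And>x. x \<in> carrier G \<Longrightarrow> f (x \<otimes>\<^bsub>G\<^esub> b) = f x \<otimes>\<^bsub>G'\<^esub> b'"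
    using iso by (auto simp: rmap_iso_def omap_iso_def RotaMap_def)
  have f: "f \<in> carrier G \<rightarrow> carrier G'" using bij by (auto simp: bij_betw_def)
  have f_eval: "f (eval_word G a b w) = f \<one>\<^bsub>G\<^esub> \<otimes>\<^bsub>G'\<^esub> eval_word G' a' b' w" for w
    using intertwiner_eval_word[OF G.is_group ab(1,2) G'.is_group ab(3,4) f fa fb G.one_closed]
      ab by (simp add: G.eval_word_closed)
  have f1: "f \<one>\<^bsub>G\<^esub> \<in> carrier G'" using f by auto
  have "eval_word G a b w = \<one>\<^bsub>G\<^esub> \<longleftrightarrow> eval_word G' a' b' w = \<one>\<^bsub>G'\<^esub>" for w
  proof
    assume "eval_word G a b w = \<one>\<^bsub>G\<^esub>"
    then have "f \<one>\<^bsub>G\<^esub> \<otimes>\<^bsub>G'\<^esub> eval_word G' a' b' w = f \<one>\<^bsub>G\<^esub> \<otimes>\<^bsub>G'\<^esub> \<one>\<^bsub>G'\<^esub>"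
      using f_eval[of w] f1 by simp
    then show "eval_word G' a' b' w = \<one>\<^bsub>G'\<^esub>"
      using f1 ab G'.l_cancel G'.eval_word_closed by blast
  next
    assume "eval_word G' a' b' w = \<one>\<^bsub>G'\<^esub>"
    then have "f (eval_word G a b w) = f \<one>\<^bsub>G\<^esub>" using f_eval[of w] f1 by simp
    then show "eval_word G a b w = \<one>\<^bsub>G\<^esub>"
      using bij ab G.eval_word_closed by (auto simp: bij_betw_def inj_on_def)
  qed
  then show ?thesis by (simp add: relators_def)
qed

lemma relators_eq_imp_rmap_iso:
  assumes gen: "rmap_generated (G, a, b)" "rmap_generated (G', a', b')"
    and rel: "relators G a b = relators G' a' b'"
  shows "rmap_iso (G, a, b) (G', a', b')"
proof -
  interpret G: group G using gen by (simp add: rmap_generated_def)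
  interpret G': group G' using gen by (simp add: rmap_generated_def)
  have ab: "a \<in> carrier G" "b \<in> carrier G" "a' \<in> carrier G'" "b' \<in> carrier G'"
    and cG: "carrier G = range (eval_word G a b)" and cG': "carrier G' = range (eval_word G' a' b')"
    using gen by (auto simp: rmap_generated_def)
  have eval_eq_iff:
    "eval_word G a b w1 = eval_word G a b w2 \<longleftrightarrow> eval_word G' a' b' w1 = eval_word G' a' b' w2"
    for w1 w2
    using rel G.eval_word_eq_iff[OF ab(1,2)] G'.eval_word_eq_iff[OF ab(3,4)]
    by (auto simp: relators_def set_eq_iff)
  define f where "f g = eval_word G' a' b' (SOME w. g = eval_word G a b w)" for g
  have f_eval: "f (eval_word G a b w) = eval_word G' a' b' w" for w
  proof -
    have "eval_word G a b w = eval_word G a b (SOME w'. eval_word G a b w = eval_word G a b w')"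
      by (rule someI_ex) auto
    then show ?thesis unfolding f_def using eval_eq_iff by metis
  qed
  have bij: "bij_betw f (carrier G) (carrier G')"
  proof (rule bij_betw_imageI)
    show "inj_on f (carrier G)"
      unfolding cG by (auto simp: inj_on_def f_eval eval_eq_iff)
    show "f ` carrier G = carrier G'"
      unfolding cG cG' by (auto simp: f_eval image_iff)
  qed
  have "f (x \<otimes>\<^bsub>G\<^esub> a) = f x \<otimes>\<^bsub>G'\<^esub> a' \<and> f (x \<otimes>\<^bsub>G\<^esub> b) = f x \<otimes>\<^bsub>G'\<^esub> b'" if "x \<in> carrier G" for x
  proof -
    obtain w where x: "x = eval_word G a b w" using \<open>x \<in> carrier G\<close> cG by auto
    have "x \<otimes>\<^bsub>G\<^esub> a = eval_word G a b (w @ [(False, False)])"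
      and "x \<otimes>\<^bsub>G\<^esub> b = eval_word G a b (w @ [(True, False)])"
      using x ab by (simp_all add: G.eval_word_append letter_def)
    then show ?thesis
      using x ab by (simp add: f_eval G'.eval_word_append letter_def)
  qed
  then show ?thesis using bij
    unfolding rmap_iso_def omap_iso_def RotaMap_def by auto
qed

lemma rmap_iso_iff_relators_eq:
  assumes "rmap_generated M" "rmap_generated N"
  shows "rmap_iso M N \<longleftrightarrow> rmap_relators M = rmap_relators N"
proof (cases M, cases N)
  fix G a b G' a' b' assume "M = (G, a, b)" "N = (G', a', b')"
  then show ?thesis
    using assms rmap_iso_imp_relators_eq[of G a b G' a' b'] relators_eq_imp_rmap_iso[of G a b G' a' b']
    by (auto simp: rmap_relators_def)
qed

lemma rmap_prod_generated_relators:
  fixes M :: "nat \<Rightarrow> 'a rmap"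
  assumes gen: "\<And>i. i < m \<Longrightarrow> rmap_generated (M i)"
  shows "rmap_generated (rmap_prod m M)"
    and "rmap_relators (rmap_prod m M) = (\<Inter>i<m. rmap_relators (M i))"
proof -
  define P where "P = product_group {..<m} (\<lambda>i. fst (M i))"
  define \<rho> where "\<rho> = (\<lambda>i\<in>{..<m}. fst (snd (M i)))"
  define \<tau> where "\<tau> = (\<lambda>i\<in>{..<m}. snd (snd (M i)))"
  define H where "H = range (eval_word P \<rho> \<tau>)"
  have grp: "group (fst (M i))" and gens: "fst (snd (M i)) \<in> carrier (fst (M i))"
    "snd (snd (M i)) \<in> carrier (fst (M i))" if "i < m" for i
    using gen[OF that] by (cases "M i", simp add: rmap_generated_def)+
  interpret P: group P unfolding P_def by (intro product_group grp) simp
  have ab: "\<rho> \<in> carrier P" "\<tau> \<in> carrier P"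
    using gens by (auto simp: P_def \<rho>_def \<tau>_def)
  have prod: "rmap_prod m M = (P\<lparr>carrier := H\<rparr>, \<rho>, \<tau>)"
    using P.generate_eq_range_eval_word[OF ab]
    by (simp add: rmap_prod_def Let_def P_def \<rho>_def \<tau>_def H_def)
  have sub: "subgroup H P"
    using P.generate_is_subgroup[of "{\<rho>, \<tau>}"] P.generate_eq_range_eval_word ab by (auto simp: H_def)
  have in_sub: "\<rho> \<in> H" "\<tau> \<in> H"
    using P.generate_eq_range_eval_word[OF ab] ab by (auto simp: H_def intro: generate.incl)
  have eval_H: "eval_word (P\<lparr>carrier := H\<rparr>) \<rho> \<tau> w = eval_word P \<rho> \<tau> w" for w
    by (rule P.eval_word_subgroup[OF sub in_sub])
  show "rmap_generated (rmap_prod m M)"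
    unfolding prod rmap_generated_def
    using P.subgroup_imp_group[OF sub] in_sub by (simp add: eval_H H_def[symmetric])
  have "eval_word P \<rho> \<tau> w = (\<lambda>i\<in>{..<m}. eval_word (fst (M i)) (\<rho> i) (\<tau> i) w)" for w
    unfolding P_def by (rule eval_word_product_group) (use grp ab in \<open>auto simp: P_def\<close>)
  then have eval_P: "eval_word P \<rho> \<tau> w =
      (\<lambda>i\<in>{..<m}. eval_word (fst (M i)) (fst (snd (M i))) (snd (snd (M i))) w)" for w
    by (simp add: \<rho>_def \<tau>_def cong: restrict_cong)
  have one_P: "\<one>\<^bsub>P\<^esub> = (\<lambda>i\<in>{..<m}. \<one>\<^bsub>fst (M i)\<^esub>)" by (simp add: P_def)
  have "w \<in> rmap_relators (rmap_prod m M) \<longleftrightarrow> w \<in> (\<Inter>i<m. rmap_relators (M i))" for w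
  proof -
    have "w \<in> rmap_relators (rmap_prod m M) \<longleftrightarrow>
        (\<lambda>i\<in>{..<m}. eval_word (fst (M i)) (fst (snd (M i))) (snd (snd (M i))) w) =
        (\<lambda>i\<in>{..<m}. \<one>\<^bsub>fst (M i)\<^esub>)"
      by (simp add: prod rmap_relators_def relators_def eval_H eval_P one_P)
    also have "\<dots> \<longleftrightarrow> (\<forall>i<m. eval_word (fst (M i)) (fst (snd (M i))) (snd (snd (M i))) w = \<one>\<^bsub>fst (M i)\<^esub>)"
    proof
      assume eq: "(\<lambda>i\<in>{..<m}. eval_word (fst (M i)) (fst (snd (M i))) (snd (snd (M i))) w) =
        (\<lambda>i\<in>{..<m}. \<one>\<^bsub>fst (M i)\<^esub>)"
      show "\<forall>i<m. eval_word (fst (M i)) (fst (snd (M i))) (snd (snd (M i))) w = \<one>\<^bsub>fst (M i)\<^esub>"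
      proof (intro allI impI)
        fix i assume "i < m"
        then show "eval_word (fst (M i)) (fst (snd (M i))) (snd (snd (M i))) w = \<one>\<^bsub>fst (M i)\<^esub>"
          using fun_cong[OF eq, of i] by simp
      qed
    qed (intro restrict_ext, simp)
    also have "\<dots> \<longleftrightarrow> w \<in> (\<Inter>i<m. rmap_relators (M i))"
      by (auto simp: rmap_relators_def relators_def prod.case_eq_if)
    finally show ?thesis .
  qed
  then show "rmap_relators (rmap_prod m M) = (\<Inter>i<m. rmap_relators (M i))" by blast
qed


section \<open>Groups generated by two involutions\<close>

context group
begin

definition dihedral_elements :: "'a \<Rightarrow> 'a \<Rightarrow> nat \<Rightarrow> 'a set" where
  "dihedral_elements c a n = (\<lambda>i. c [^] i) ` {..<n} \<union> (\<lambda>i. c [^] i \<otimes> a) ` {..<n}"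

lemma finite_dihedral_elements: "finite (dihedral_elements c a n)"
  by (simp add: dihedral_elements_def)

lemma card_dihedral_elements_le: "card (dihedral_elements c a n) \<le> 2 * n"
proof -
  have "card (dihedral_elements c a n) \<le> card ((\<lambda>i. c [^] i) ` {..<n}) + card ((\<lambda>i. c [^] i \<otimes> a) ` {..<n})"
    unfolding dihedral_elements_def by (rule card_Un_le)
  also have "\<dots> \<le> n + n"
    by (intro add_mono) (simp_all add: card_image_le[of "{..<n}", simplified])
  finally show ?thesis by simp
qed

lemma nat_pow_mod:
  fixes n k :: nat
  assumes "c \<in> carrier G" "c [^] n = \<one>"
  shows "c [^] k = c [^] (k mod n)"
proof -
  have "c [^] k = c [^] (n * (k div n)) \<otimes> c [^] (k mod n)"
    using nat_pow_mult[OF assms(1)] by (metis mult_div_mod_eq)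
  also have "c [^] (n * (k div n)) = \<one>"
    using nat_pow_pow[OF assms(1), of n "k div n"] assms(2) by simp
  finally show ?thesis using assms(1) by simp
qed

lemma involution_mult_rotation_pow:
  fixes n :: nat
  assumes ab: "a \<in> carrier G" "b \<in> carrier G" and aa: "a \<otimes> a = \<one>" and bb: "b \<otimes> b = \<one>"
    and cn: "(a \<otimes> b) [^] n = \<one>" and n: "n \<ge> 1"
  shows "a \<otimes> (a \<otimes> b) [^] i = (a \<otimes> b) [^] ((n - 1) * i) \<otimes> a"
proof -
  define c where "c = a \<otimes> b"
  have c: "c \<in> carrier G" using ab by (simp add: c_def)
  have ac: "a \<otimes> c = c [^] (n - 1) \<otimes> a"
  proof -
    have "c [^] (n - 1) \<otimes> c = \<one>"
      using c cn n by (simp add: c_def nat_pow_Suc[symmetric] del: nat_pow_Suc)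
    then have "c [^] (n - 1) = inv c" using c by (simp add: inv_equality)
    also have "inv c = b \<otimes> a"
      using ab aa bb by (simp add: c_def inv_mult_group inv_equality)
    finally have "c [^] (n - 1) \<otimes> a = b" using ab aa by (simp add: m_assoc)
    moreover have "a \<otimes> c = b" using ab aa by (simp add: c_def m_assoc[symmetric])
    ultimately show ?thesis by simp
  qed
  show ?thesis unfolding c_def[symmetric]
  proof (induction i)
    case (Suc i)
    have "a \<otimes> c [^] Suc i = (a \<otimes> c [^] i) \<otimes> c" using ab c by (simp add: m_assoc)
    also have "\<dots> = c [^] ((n - 1) * i) \<otimes> (a \<otimes> c)" using Suc ab c by (simp add: m_assoc)
    also have "\<dots> = c [^] ((n - 1) * Suc i) \<otimes> a"
      using ac ab c by (simp add: m_assoc[symmetric] nat_pow_mult add.commute)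
    finally show ?case .
  qed (use ab in simp)
qed

lemma dihedral_elements_mult_closed:
  fixes n :: nat
  assumes ab: "a \<in> carrier G" "b \<in> carrier G" and aa: "a \<otimes> a = \<one>" and bb: "b \<otimes> b = \<one>"
    and cn: "(a \<otimes> b) [^] n = \<one>" and n: "n \<ge> 1"
    and s: "s \<in> dihedral_elements (a \<otimes> b) a n"
  shows "a \<otimes> s \<in> dihedral_elements (a \<otimes> b) a n" "b \<otimes> s \<in> dihedral_elements (a \<otimes> b) a n"
proof -
  define c where "c = a \<otimes> b"
  define D where "D = dihedral_elements c a n"
  have c: "c \<in> carrier G" using ab by (simp add: c_def)
  have cpow: "c [^] k \<in> D" and cpowa: "c [^] k \<otimes> a \<in> D" for k :: nat
    using nat_pow_mod[OF c cn[folded c_def], of k] n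
    by (auto simp: D_def dihedral_elements_def)
  have acp: "a \<otimes> c [^] i = c [^] ((n - 1) * i) \<otimes> a" for i :: nat
    unfolding c_def by (rule involution_mult_rotation_pow[OF assms(1-6)])
  have D_cases: "\<exists>i::nat. t = c [^] i \<or> t = c [^] i \<otimes> a" if "t \<in> D" for t
    using that by (auto simp: D_def dihedral_elements_def)
  have a_D: "a \<otimes> t \<in> D" if "t \<in> D" for t
  proof -
    obtain i :: nat where "t = c [^] i \<or> t = c [^] i \<otimes> a" using D_cases \<open>t \<in> D\<close> by blast
    then show ?thesis
    proof
      assume "t = c [^] i"
      then show ?thesis using acp[of i] cpowa by simp
    next
      assume "t = c [^] i \<otimes> a"
      then have "a \<otimes> t = c [^] ((n - 1) * i) \<otimes> (a \<otimes> a)"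
        using acp[of i] ab c by (simp add: m_assoc[symmetric])
      then show ?thesis using aa c cpow by simp
    qed
  qed
  have c_D: "c \<otimes> t \<in> D" if "t \<in> D" for t
  proof -
    obtain i :: nat where "t = c [^] i \<or> t = c [^] i \<otimes> a" using D_cases \<open>t \<in> D\<close> by blast
    then show ?thesis
    proof
      assume "t = c [^] i"
      then show ?thesis using c cpow[of "Suc i"] nat_pow_Suc2[of c i] by metis
    next
      assume "t = c [^] i \<otimes> a"
      then have "c \<otimes> t = c [^] Suc i \<otimes> a"
        using c ab nat_pow_Suc2[OF c, of i] by (simp add: m_assoc)
      then show ?thesis using cpowa[of "Suc i"] by simp
    qed
  qed
  have s_D: "s \<in> D" using s by (simp add: D_def c_def)
  have "b = a \<otimes> c" using ab aa by (simp add: c_def m_assoc[symmetric])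
  moreover have "s \<in> carrier G" using s_D c ab by (auto simp: D_def dihedral_elements_def)
  ultimately have "b \<otimes> s = a \<otimes> (c \<otimes> s)" using ab c by (simp add: m_assoc)
  then show "a \<otimes> s \<in> dihedral_elements (a \<otimes> b) a n" "b \<otimes> s \<in> dihedral_elements (a \<otimes> b) a n"
    using a_D c_D s_D by (simp_all add: D_def c_def)
qed

end

context group
begin

lemma range_eval_word_subset_dihedral_elements:
  fixes n :: nat
  assumes ab: "a \<in> carrier G" "b \<in> carrier G" and aa: "a \<otimes> a = \<one>" and bb: "b \<otimes> b = \<one>"
    and cn: "(a \<otimes> b) [^] n = \<one>" and n: "n \<ge> 1"
  shows "range (eval_word G a b) \<subseteq> dihedral_elements (a \<otimes> b) a n"
proof -
  have "inv a = a" "inv b = b" using ab aa bb by (simp_all add: inv_equality)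
  moreover have "\<one> \<in> dihedral_elements (a \<otimes> b) a n"
    using n by (force simp: dihedral_elements_def)
  ultimately have "eval_word G a b w \<in> dihedral_elements (a \<otimes> b) a n" for w
    using dihedral_elements_mult_closed[OF assms] by (induction w) (auto simp: letter_def)
  then show ?thesis by blast
qed

lemma card_le_dihedral_index:
  fixes n :: nat
  assumes fin: "finite (carrier G)" and gen: "carrier G = range (eval_word G a b)"
    and ab: "a \<in> carrier G" "b \<in> carrier G" and bb: "b \<otimes> b = \<one>"
    and L: "L \<lhd> G" and aaL: "a \<otimes> a \<in> L" and cnL: "(a \<otimes> b) [^] n \<in> L" and n: "n \<ge> 1"
  shows "card (carrier G) \<le> 2 * n * card L"
proof -
  interpret L: normal L G by (rule L)
  define Q where "Q = G Mod L"
  interpret Q: group Q unfolding Q_def by (rule L.factorgroup_is_group)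
  define \<pi> where "\<pi> g = L #> g" for g
  have hom: "\<pi> \<in> hom G Q" unfolding \<pi>_def Q_def by (rule L.r_coset_hom_Mod)
  have \<pi>_one: "\<pi> g = \<one>\<^bsub>Q\<^esub>" if "g \<in> L" for g
    using that L.rcos_const[OF is_group] by (simp add: \<pi>_def Q_def)
  have ab': "\<pi> a \<in> carrier Q" "\<pi> b \<in> carrier Q" using hom ab by (auto simp: hom_def)
  have "\<pi> a \<otimes>\<^bsub>Q\<^esub> \<pi> a = \<one>\<^bsub>Q\<^esub>" using hom ab \<pi>_one[OF aaL] by (simp add: hom_mult[symmetric])
  moreover have "\<pi> b \<otimes>\<^bsub>Q\<^esub> \<pi> b = \<one>\<^bsub>Q\<^esub>"
    using hom ab \<pi>_one[of "b \<otimes> b"] bb L.one_closed by (simp add: hom_mult[symmetric])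
  moreover have "(\<pi> a \<otimes>\<^bsub>Q\<^esub> \<pi> b) [^]\<^bsub>Q\<^esub> n = \<one>\<^bsub>Q\<^esub>"
    using hom ab \<pi>_one[OF cnL] by (simp add: hom_mult[symmetric] hom_nat_pow)
  ultimately have cover: "range (eval_word Q (\<pi> a) (\<pi> b)) \<subseteq> Q.dihedral_elements (\<pi> a \<otimes>\<^bsub>Q\<^esub> \<pi> b) (\<pi> a) n"
    using Q.range_eval_word_subset_dihedral_elements[OF ab'] n by blast
  have "carrier Q = \<pi> ` carrier G"
    by (simp add: Q_def \<pi>_def carrier_FactGroup)
  also have "\<dots> = range (eval_word Q (\<pi> a) (\<pi> b))"
    unfolding gen using hom_eval_word[OF is_group Q.is_group hom ab] by (auto simp: image_iff)
  finally have "card (carrier Q) \<le> 2 * n"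
    using cover Q.card_dihedral_elements_le
    by (metis card_mono Q.finite_dihedral_elements order_trans)
  moreover have "card (carrier Q) * card L = card (carrier G)"
    using lagrange[OF L.subgroup_axioms] by (simp add: Q_def FactGroup_def order_def)
  ultimately show ?thesis
    by (metis mult_le_mono1)
qed

lemma conj_inv_closed_if_finite:
  assumes fin: "finite L" and L: "L \<subseteq> carrier G" and g: "g \<in> carrier G"
    and cl: "\<And>l. l \<in> L \<Longrightarrow> g \<otimes> l \<otimes> inv g \<in> L" and l: "l \<in> L"
  shows "inv g \<otimes> l \<otimes> g \<in> L"
proof -
  define f where "f l = g \<otimes> l \<otimes> inv g" for l
  have "inj_on f L"
    using L g by (intro inj_onI) (auto simp: f_def subsetD)
  moreover have "f ` L \<subseteq> L" using cl by (auto simp: f_def)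
  ultimately have "f ` L = L" using endo_inj_surj[OF fin] by simp
  then obtain l' where l': "l' \<in> L" "l = f l'" using l by (metis imageE)
  moreover have "l' \<in> carrier G" using l' L by auto
  ultimately have "inv g \<otimes> l \<otimes> g = l'"
    using g by (simp add: f_def m_assoc) (simp add: m_assoc[symmetric])
  then show ?thesis using l' by simp
qed

lemma normal_if_conj_closed_generators:
  assumes fin: "finite (carrier G)" and gen: "carrier G = range (eval_word G a b)"
    and ab: "a \<in> carrier G" "b \<in> carrier G" and sub: "subgroup L G"
    and ca: "\<And>l. l \<in> L \<Longrightarrow> a \<otimes> l \<otimes> inv a \<in> L"
    and cb: "\<And>l. l \<in> L \<Longrightarrow> b \<otimes> l \<otimes> inv b \<in> L"
  shows "L \<lhd> G"
proof -
  have Lc: "L \<subseteq> carrier G" using sub by (rule subgroup.subset)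
  have finL: "finite L" using fin Lc finite_subset by blast
  have "letter G a b c \<otimes> l \<otimes> inv (letter G a b c) \<in> L" if "l \<in> L" for c l
    using that ca cb conj_inv_closed_if_finite[OF finL Lc] ab by (auto simp: letter_def)
  then have "eval_word G a b w \<otimes> l \<otimes> inv (eval_word G a b w) \<in> L" if "l \<in> L" for w l
    using that
  proof (induction w arbitrary: l)
    case (Cons c w)
    have "eval_word G a b (c # w) \<otimes> l \<otimes> inv (eval_word G a b (c # w)) =
          letter G a b c \<otimes> (eval_word G a b w \<otimes> l \<otimes> inv (eval_word G a b w)) \<otimes> inv (letter G a b c)"
      using Cons.prems Lc ab
      by (simp add: m_assoc inv_mult_group letter_closed eval_word_closed subsetD)
    then show ?case using Cons by simp
  qed (use Lc in auto)
  then show ?thesis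
    unfolding normal_inv_iff using sub gen by auto
qed

lemma pow_two_eq_one_if_commute:
  assumes ab: "a \<in> carrier G" "b \<in> carrier G" and aa: "a \<otimes> a = \<one>" and bb: "b \<otimes> b = \<one>"
    and comm: "a \<otimes> (a \<otimes> b) = (a \<otimes> b) \<otimes> a"
  shows "(a \<otimes> b) [^] (2::nat) = \<one>"
proof -
  have ba: "b \<otimes> a = a \<otimes> b"
  proof -
    have "b \<otimes> a = a \<otimes> (a \<otimes> b) \<otimes> a" using ab aa by (simp add: m_assoc[symmetric])
    also have "\<dots> = a \<otimes> b \<otimes> a \<otimes> a" using comm by simp
    also have "\<dots> = a \<otimes> b" using ab aa by (simp add: m_assoc)
    finally show ?thesis .
  qed
  have "(a \<otimes> b) [^] (2::nat) = a \<otimes> (b \<otimes> a) \<otimes> b" using ab by (simp add: numeral_2_eq_2 m_assoc)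
  also have "\<dots> = (a \<otimes> a) \<otimes> (b \<otimes> b)" using ab by (simp add: ba m_assoc)
  finally show ?thesis using aa bb by simp
qed

lemma prod_involutions_pow_eq_one:
  assumes fin: "finite (carrier G)" and gen: "carrier G = range (eval_word G a b)"
    and ab: "a \<in> carrier G" "b \<in> carrier G" and aa: "a \<otimes> a = \<one>" and bb: "b \<otimes> b = \<one>"
    and card: "card (carrier G) = 2 * r" and r: "r \<ge> 3"
  shows "(a \<otimes> b) [^] r = \<one>"
proof -
  define c where "c = a \<otimes> b"
  have c: "c \<in> carrier G" using ab by (simp add: c_def)
  define n where "n = ord c"
  have n1: "n \<ge> 1" using ord_ge_1[OF fin c] by (simp add: n_def)
  have cn: "c [^] n = \<one>" using c by (simp add: n_def)
  have "card (carrier G) \<le> 2 * n * card {\<one>}"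
    by (rule card_le_dihedral_index[OF fin gen ab bb one_is_normal]) (use aa cn n1 in \<open>auto simp: c_def\<close>)
  then have "r \<le> n" using card by simp
  have "n dvd 2 * r" using ord_dvd_group_order[OF c] card by (simp add: n_def order_def)
  have "n \<noteq> 2 * r"
  proof
    assume n2: "n = 2 * r"
    have "card (generate G {c}) = n" using generate_pow_card[OF c] by (simp add: n_def)
    then have "generate G {c} = carrier G"
      using card_subset_eq[OF fin] c card n2 by (simp add: generate_incl)
    then have "carrier G = {c [^] k | k. k \<in> (UNIV :: nat set)}"
      using generate_pow_nat[OF c] n1 by (simp add: n_def)
    then obtain k :: nat where "a = c [^] k" using ab by auto
    then have "a \<otimes> c = c \<otimes> a"
      using nat_pow_Suc2[OF c, of k] nat_pow_Suc[of c k] by simp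
    then have "n dvd 2"
      using pow_two_eq_one_if_commute[OF ab aa bb] pow_eq_id[OF c] by (simp add: c_def n_def)
    then show False using n2 r by (simp add: dvd_imp_le)
  qed
  moreover obtain q where q: "2 * r = n * q" using \<open>n dvd 2 * r\<close> by (elim dvdE)
  moreover have "q \<noteq> 0" using q r by (intro notI) simp
  ultimately have "q \<ge> 2" by (cases "q = 1") auto
  then have "n * 2 \<le> 2 * r" using q by (metis mult_le_mono2)
  with \<open>r \<le> n\<close> have "n = r" by simp
  then show ?thesis using cn by (simp add: c_def)
qed

lemma in_normal_if_pow_prime_eq_one:
  assumes fin: "finite (carrier G)" and K: "K \<lhd> G" and card: "card (carrier G) = d * card K"
    and p: "coprime p d" and g: "g \<in> carrier G" and gp: "g [^] p = \<one>"
  shows "g \<in> K"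
proof -
  interpret K: normal K G by (rule K)
  define Q where "Q = G Mod K"
  interpret Q: group Q unfolding Q_def by (rule K.factorgroup_is_group)
  have "card K > 0" using K.finite_imp_card_positive fin by simp
  moreover have "card (rcosets K) * card K = d * card K"
    using lagrange[OF K.subgroup_axioms] card by (simp add: order_def)
  ultimately have cQ: "order Q = d" by (simp add: Q_def order_def FactGroup_def)
  define h where "h = K #> g"
  have h: "h \<in> carrier Q" using g K.subset by (simp add: h_def Q_def FactGroup_def rcosetsI)
  have "h [^]\<^bsub>Q\<^esub> p = \<one>\<^bsub>Q\<^esub>"
    using K.FactGroup_pow[OF g] gp K.subset by (simp add: h_def Q_def coset_mult_one)
  moreover have "h [^]\<^bsub>Q\<^esub> d = \<one>\<^bsub>Q\<^esub>" using Q.pow_order_eq_1[OF h] cQ by simp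
  ultimately have "Q.ord h dvd 1"
    using Q.pow_eq_id[OF h] p by (metis coprime_common_divisor)
  then have "h = \<one>\<^bsub>Q\<^esub>" using Q.pow_eq_id[OF h, of 1] h by simp
  then have "K #> g = K" by (simp add: h_def Q_def)
  then show ?thesis using coset_join1[OF _ g K.subgroup_axioms] by simp
qed

end

section \<open>Valency and index computations\<close>

lemma mgraph_iso_card:
  assumes "mgraph_iso (V, E, en) (V', E', en')"
  shows "card V = card V'" "card E = card E'"
  using assms unfolding mgraph_iso_def by (auto intro: bij_betw_same_card)

lemma card_PX_graph:
  "card (fst (PX_graph p r s)) = r * p ^ s" "card (fst (snd (PX_graph p r s))) = r * p ^ Suc s"
proof -
  have "fst (PX_graph p r s) = {..<r} \<times> {xs. set xs \<subseteq> {..<p} \<and> length xs = s}"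
    and "fst (snd (PX_graph p r s)) = {..<r} \<times> {xs. set xs \<subseteq> {..<p} \<and> length xs = Suc s}"
    by (auto simp: PX_graph_def)
  then show "card (fst (PX_graph p r s)) = r * p ^ s" "card (fst (snd (PX_graph p r s))) = r * p ^ Suc s"
    by (simp_all add: card_cartesian_product card_lists_length_eq)
qed

lemma (in group) card_lcosets_generate_singleton:
  assumes "finite (carrier G)" "x \<in> carrier G"
  shows "card (\<Union>g\<in>carrier G. {g <# generate G {x}}) * ord x = card (carrier G)"
  using l_lagrange[OF assms(1) generate_is_subgroup] generate_pow_card[OF assms(2)] assms(2)
  by (simp add: LCOSETS_def order_def)

text \<open>The vertex stabiliser \<open>\<langle>\<rho>\<rangle>\<close> has order equal to the valency \<open>2|E|/|V|\<close>, which is \<open>2p\<close> for a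
  PX graph and \<open>2\<close> for a cycle.\<close>

lemma augmented_PX_map_rotation_pow:
  assumes aug: "augmented_PX_map p r (G, a, b)" and r: "r \<ge> 1" and p: "p \<ge> 1"
  shows "a [^]\<^bsub>G\<^esub> (2 * p) = \<one>\<^bsub>G\<^esub>"
proof -
  have rd: "rotary_datum (G, a, b)" using aug by (simp add: augmented_PX_map_def)
  interpret G: group G using rd by (simp add: rotary_datum_def)
  have fin: "finite (carrier G)" and ab: "a \<in> carrier G" "b \<in> carrier G"
    and b1: "b \<noteq> \<one>\<^bsub>G\<^esub>" and bb: "b \<otimes>\<^bsub>G\<^esub> b = \<one>\<^bsub>G\<^esub>"
    using rd by (auto simp: rotary_datum_def)
  define V where "V = (\<Union>g\<in>carrier G. {g <#\<^bsub>G\<^esub> generate G {a}})"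
  define E where "E = (\<Union>g\<in>carrier G. {g <#\<^bsub>G\<^esub> generate G {b}})"
  have ug: "ugraph (G, a, b) = (V, E, (\<lambda>e. {v \<in> V. v \<inter> e \<noteq> {}}))"
    by (simp add: ugraph_def Let_def V_def E_def)
  have cV: "card V * G.ord a = card (carrier G)"
    using G.card_lcosets_generate_singleton[OF fin ab(1)] by (simp add: V_def)
  have "G.ord b dvd 2" using G.pow_eq_id[OF ab(2), of 2] bb ab by (simp add: numeral_2_eq_2)
  moreover have "G.ord b \<noteq> 1" using G.pow_eq_id[OF ab(2), of 1] b1 ab by auto
  moreover have "G.ord b \<noteq> 0" using G.ord_ge_1[OF fin ab(2)] by simp
  ultimately have "G.ord b = 2" using dvd_imp_le[of "G.ord b" 2] by linarith
  then have cE: "card E * 2 = card (carrier G)"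
    using G.card_lcosets_generate_singleton[OF fin ab(2)] by (simp add: E_def)
  have "G.ord a dvd 2 * p"
  proof (cases "\<exists>s. mgraph_iso (ugraph (G, a, b)) (PX_graph p r s)")
    case True
    then obtain s where iso: "mgraph_iso (V, E, (\<lambda>e. {v \<in> V. v \<inter> e \<noteq> {}})) (PX_graph p r s)"
      using ug by auto
    obtain V' E' en' where PX: "PX_graph p r s = (V', E', en')" by (metis prod_cases3)
    have "card V = r * p ^ s" "card E = r * p ^ Suc s"
      using mgraph_iso_card[OF iso[unfolded PX]] card_PX_graph[of p r s] PX by auto
    then have "r * p ^ s * G.ord a = r * p ^ s * (2 * p)" using cV cE by (simp add: algebra_simps)
    then show ?thesis using r p by simp
  next
    case False
    then have iso: "mgraph_iso (V, E, (\<lambda>e. {v \<in> V. v \<inter> e \<noteq> {}})) (cycle_graph (p * r))"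
      using aug ug by (simp add: augmented_PX_map_def)
    have "card V = p * r" "card E = p * r"
      using mgraph_iso_card[OF iso[unfolded cycle_graph_def]] by auto
    then have "p * r * G.ord a = p * r * 2" using cV cE by (simp add: algebra_simps)
    then show ?thesis using r p by simp
  qed
  then show ?thesis using G.pow_eq_id[OF ab(1)] by simp
qed

lemma card_set_mult_eq:
  assumes grp: "group G" and K: "subgroup K G" and D: "subgroup D G" and KD: "K \<inter> D = {\<one>\<^bsub>G\<^esub>}"
  shows "card (K <#>\<^bsub>G\<^esub> D) = card K * card D"
proof -
  interpret G: group G by (rule grp)
  have Kc: "K \<subseteq> carrier G" and Dc: "D \<subseteq> carrier G" using K D by (auto dest: subgroup.subset)
  define f where "f = (\<lambda>(k, d). k \<otimes>\<^bsub>G\<^esub> d)"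
  have "inj_on f (K \<times> D)"
  proof (rule inj_onI, clarify)
    fix k d k' d' assume h: "k \<in> K" "d \<in> D" "k' \<in> K" "d' \<in> D" "f (k, d) = f (k', d')"
    have c: "k \<in> carrier G" "d \<in> carrier G" "k' \<in> carrier G" "d' \<in> carrier G" using h Kc Dc by auto
    have "inv\<^bsub>G\<^esub> k' \<otimes>\<^bsub>G\<^esub> k = d' \<otimes>\<^bsub>G\<^esub> inv\<^bsub>G\<^esub> d"
    proof -
      have "inv\<^bsub>G\<^esub> k' \<otimes>\<^bsub>G\<^esub> (k \<otimes>\<^bsub>G\<^esub> d) = inv\<^bsub>G\<^esub> k' \<otimes>\<^bsub>G\<^esub> (k' \<otimes>\<^bsub>G\<^esub> d')"
        using h by (simp add: f_def)
      then have "inv\<^bsub>G\<^esub> k' \<otimes>\<^bsub>G\<^esub> k \<otimes>\<^bsub>G\<^esub> d = d'" using c by (simp add: G.m_assoc[symmetric])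
      then have "inv\<^bsub>G\<^esub> k' \<otimes>\<^bsub>G\<^esub> k \<otimes>\<^bsub>G\<^esub> d \<otimes>\<^bsub>G\<^esub> inv\<^bsub>G\<^esub> d = d' \<otimes>\<^bsub>G\<^esub> inv\<^bsub>G\<^esub> d" by simp
      then show ?thesis using c by (simp add: G.m_assoc)
    qed
    moreover have "inv\<^bsub>G\<^esub> k' \<otimes>\<^bsub>G\<^esub> k \<in> K"
      using h K by (simp add: subgroup.m_closed subgroup.m_inv_closed)
    moreover have "d' \<otimes>\<^bsub>G\<^esub> inv\<^bsub>G\<^esub> d \<in> D"
      using h D by (simp add: subgroup.m_closed subgroup.m_inv_closed)
    ultimately have "inv\<^bsub>G\<^esub> k' \<otimes>\<^bsub>G\<^esub> k = \<one>\<^bsub>G\<^esub>" "d' \<otimes>\<^bsub>G\<^esub> inv\<^bsub>G\<^esub> d = \<one>\<^bsub>G\<^esub>" using KD by auto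
    then show "k = k' \<and> d = d'" using c
      by (metis G.inv_equality G.inv_inv G.inv_closed G.r_inv G.inv_comm)
  qed
  moreover have "f ` (K \<times> D) = K <#>\<^bsub>G\<^esub> D" by (auto simp: f_def set_mult_def)
  ultimately have "card (K <#>\<^bsub>G\<^esub> D) = card (K \<times> D)" by (metis card_image)
  then show ?thesis by (simp add: card_cartesian_product)
qed

lemma (in normal) range_eval_word_FactGroup:
  assumes gen: "carrier G = range (eval_word G a b)" and ab: "a \<in> carrier G" "b \<in> carrier G"
  shows "carrier (G Mod H) = range (eval_word (G Mod H) (H #> a) (H #> b))"
proof -
  have "(\<lambda>g. H #> g) \<in> hom G (G Mod H)" by (rule r_coset_hom_Mod)
  then show ?thesis
    unfolding carrier_FactGroup gen using hom_eval_word[OF is_group factorgroup_is_group _ ab]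
    by (auto simp: image_iff)
qed

lemma (in group) rotation_pow_in_normal:
  assumes fin: "finite (carrier G)" and gen: "carrier G = range (eval_word G a b)"
    and ab: "a \<in> carrier G" "b \<in> carrier G" and bb: "b \<otimes> b = \<one>"
    and K: "K \<lhd> G" and card: "card (carrier G) = 2 * r * card K" and r: "r \<ge> 3"
    and aa: "a \<otimes> a \<in> K"
  shows "(a \<otimes> b) [^] r \<in> K"
proof -
  interpret K: normal K G by (rule K)
  define Q where "Q = G Mod K"
  interpret Q: group Q unfolding Q_def by (rule K.factorgroup_is_group)
  have "card K > 0" using K.finite_imp_card_positive fin by simp
  moreover have "card (rcosets K) * card K = 2 * r * card K"
    using lagrange[OF K.subgroup_axioms] card by (simp add: order_def)
  ultimately have cQ: "card (carrier Q) = 2 * r" by (simp add: Q_def FactGroup_def)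
  have finQ: "finite (carrier Q)" using cQ r by (intro card_ge_0_finite) simp
  have abQ: "K #> a \<in> carrier Q" "K #> b \<in> carrier Q"
    using ab K.subset by (auto simp: Q_def FactGroup_def rcosetsI)
  have mQ: "(K #> x) \<otimes>\<^bsub>Q\<^esub> (K #> y) = K #> (x \<otimes> y)" if "x \<in> carrier G" "y \<in> carrier G" for x y
    using that by (simp add: Q_def K.rcos_sum)
  have "((K #> a) \<otimes>\<^bsub>Q\<^esub> (K #> b)) [^]\<^bsub>Q\<^esub> r = \<one>\<^bsub>Q\<^esub>"
  proof (rule Q.prod_involutions_pow_eq_one[OF finQ _ abQ _ _ cQ r])
    show "carrier Q = range (eval_word Q (K #> a) (K #> b))"
      unfolding Q_def by (rule K.range_eval_word_FactGroup[OF gen ab])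
    show "(K #> a) \<otimes>\<^bsub>Q\<^esub> (K #> a) = \<one>\<^bsub>Q\<^esub>"
      using mQ[OF ab(1) ab(1)] K.rcos_const[OF is_group aa] by (simp add: Q_def)
    show "(K #> b) \<otimes>\<^bsub>Q\<^esub> (K #> b) = \<one>\<^bsub>Q\<^esub>"
      using mQ[OF ab(2) ab(2)] bb K.subset by (simp add: Q_def coset_mult_one)
  qed
  then have "K #> ((a \<otimes> b) [^] r) = K"
    using mQ[OF ab] K.FactGroup_pow[of "a \<otimes> b" r] ab by (simp add: Q_def)
  then show ?thesis
    using coset_join1[OF _ _ K.subgroup_axioms] ab by simp
qed

lemma coprime_double_if_odd_prime:
  fixes p r :: nat
  assumes p: "Factorial_Ring.prime p" "odd p" and pr: "\<not> p dvd r"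
  shows "coprime p (2 * r)"
proof (rule prime_imp_coprime[OF p(1)], rule notI)
  assume "p dvd 2 * r"
  then have "p dvd 2" using p(1) pr by (simp add: prime_dvd_mult_iff)
  then have "p \<le> 2" by (simp add: dvd_imp_le)
  moreover have "p \<ge> 2" using p(1) by (simp add: prime_ge_2_nat)
  ultimately show False using p(2) by simp
qed


section \<open>Conjugation and the module structure of the kernel\<close>

definition conj_by :: "('a, 'm) monoid_scheme \<Rightarrow> 'a \<Rightarrow> 'a \<Rightarrow> 'a" where
  "conj_by G g y = g \<otimes>\<^bsub>G\<^esub> y \<otimes>\<^bsub>G\<^esub> inv\<^bsub>G\<^esub> g"

text \<open>Inside an abelian normal subgroup, the range of \<open>orbit_prod G x e\<close> is the \<open>\<langle>x\<rangle>\<close>-submodule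
  generated by \<open>e\<close>.\<close>

fun orbit_prod :: "('a, 'm) monoid_scheme \<Rightarrow> 'a \<Rightarrow> 'a \<Rightarrow> nat list \<Rightarrow> 'a" where
  "orbit_prod G x e [] = \<one>\<^bsub>G\<^esub>"
| "orbit_prod G x e (i # ls) = conj_by G (x [^]\<^bsub>G\<^esub> i) e \<otimes>\<^bsub>G\<^esub> orbit_prod G x e ls"

context group
begin

lemma inv_cancel_left [simp]: "x \<in> carrier G \<Longrightarrow> y \<in> carrier G \<Longrightarrow> inv x \<otimes> (x \<otimes> y) = y"
  by (simp add: m_assoc[symmetric])

lemma mult_inv_cancel_left [simp]: "x \<in> carrier G \<Longrightarrow> y \<in> carrier G \<Longrightarrow> x \<otimes> (inv x \<otimes> y) = y"
  by (simp add: m_assoc[symmetric])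

lemma conj_by_closed [simp]: "g \<in> carrier G \<Longrightarrow> y \<in> carrier G \<Longrightarrow> conj_by G g y \<in> carrier G"
  by (simp add: conj_by_def)

lemma conj_by_mult:
  "g \<in> carrier G \<Longrightarrow> y \<in> carrier G \<Longrightarrow> z \<in> carrier G \<Longrightarrow> conj_by G g (y \<otimes> z) = conj_by G g y \<otimes> conj_by G g z"
  by (simp add: conj_by_def m_assoc)

lemma conj_by_one [simp]: "g \<in> carrier G \<Longrightarrow> conj_by G g \<one> = \<one>"
  by (simp add: conj_by_def)

lemma conj_by_one_left [simp]: "y \<in> carrier G \<Longrightarrow> conj_by G \<one> y = y"
  by (simp add: conj_by_def)

lemma conj_by_conj_by:
  "g \<in> carrier G \<Longrightarrow> h \<in> carrier G \<Longrightarrow> y \<in> carrier G \<Longrightarrow> conj_by G g (conj_by G h y) = conj_by G (g \<otimes> h) y"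
  by (simp add: conj_by_def m_assoc inv_mult_group)

lemma conj_by_inv: "g \<in> carrier G \<Longrightarrow> y \<in> carrier G \<Longrightarrow> conj_by G g (inv y) = inv (conj_by G g y)"
proof -
  assume g: "g \<in> carrier G" and y: "y \<in> carrier G"
  have "conj_by G g (inv y) \<otimes> conj_by G g y = \<one>" using g y by (simp add: conj_by_mult[symmetric])
  then show ?thesis using g y by (simp add: inv_equality)
qed

lemma conj_by_pow:
  "g \<in> carrier G \<Longrightarrow> y \<in> carrier G \<Longrightarrow> conj_by G g (y [^] (k::nat)) = (conj_by G g y) [^] k"
  by (induction k) (simp_all add: conj_by_mult)

lemma conj_by_pow_pow: "x \<in> carrier G \<Longrightarrow> y \<in> carrier G \<Longrightarrow>
    conj_by G (x [^] (i::nat)) (conj_by G (x [^] (j::nat)) y) = conj_by G (x [^] (i + j)) y"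
  by (simp add: conj_by_conj_by nat_pow_mult)

lemma conj_by_inv_conj_by: "g \<in> carrier G \<Longrightarrow> y \<in> carrier G \<Longrightarrow> conj_by G (inv g) (conj_by G g y) = y"
  by (simp add: conj_by_conj_by conj_by_def[of G "\<one>"])

lemma orbit_prod_closed [simp]: "x \<in> carrier G \<Longrightarrow> e \<in> carrier G \<Longrightarrow> orbit_prod G x e ls \<in> carrier G"
  by (induction ls) auto

lemma orbit_prod_append:
  "x \<in> carrier G \<Longrightarrow> e \<in> carrier G \<Longrightarrow> orbit_prod G x e (ls @ js) = orbit_prod G x e ls \<otimes> orbit_prod G x e js"
  by (induction ls) (auto simp: m_assoc)

lemma conj_by_orbit_prod: "x \<in> carrier G \<Longrightarrow> e \<in> carrier G \<Longrightarrow>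
    conj_by G (x [^] (k::nat)) (orbit_prod G x e ls) = orbit_prod G x e (map (\<lambda>i. k + i) ls)"
  by (induction ls) (auto simp: conj_by_mult conj_by_pow_pow)

lemma orbit_prod_replicate_0:
  "x \<in> carrier G \<Longrightarrow> e \<in> carrier G \<Longrightarrow> orbit_prod G x e (replicate k 0) = e [^] k"
  by (induction k) (auto simp: nat_pow_Suc2[symmetric] simp del: nat_pow_Suc)

lemma orbit_prod_single:
  "x \<in> carrier G \<Longrightarrow> e \<in> carrier G \<Longrightarrow> orbit_prod G x e [i] = conj_by G (x [^] i) e"
  by simp

lemma in_range_orbit_prod_self: "x \<in> carrier G \<Longrightarrow> e \<in> carrier G \<Longrightarrow> e \<in> range (orbit_prod G x e)"
  using orbit_prod_single[of x e 0] by (metis conj_by_one_left nat_pow_0 rangeI)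

lemma pow_in_range_orbit_prod:
  assumes "x \<in> carrier G" "e \<in> carrier G" "y \<in> range (orbit_prod G x e)"
  shows "y [^] (k::nat) \<in> range (orbit_prod G x e)"
proof (induction k)
  case 0 then show ?case by (metis nat_pow_0 rangeI orbit_prod.simps(1))
next
  case (Suc k)
  then obtain ls js where "y [^] k = orbit_prod G x e ls" "y = orbit_prod G x e js"
    using assms by auto
  then have "y [^] Suc k = orbit_prod G x e (ls @ js)" using assms by (simp add: orbit_prod_append)
  then show ?case by simp
qed

end

text \<open>The assumptions make \<open>G/A\<close> a quotient of \<open>D\<^sub>2\<^sub>r\<close> in which \<open>a \<otimes> b\<close> is the rotation.\<close>

locale abelian_by_dihedral = group G for G (structure) +
  fixes a b :: 'a and r :: nat and A :: "'a set"
  assumes gens_closed: "a \<in> carrier G" "b \<in> carrier G"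
    and tau_involution: "b \<otimes> b = \<one>"
    and finite_carrier: "finite (carrier G)"
    and carrier_eq_range: "carrier G = range (eval_word G a b)"
    and normal_A: "A \<lhd> G"
    and A_comm: "\<And>y z. y \<in> A \<Longrightarrow> z \<in> A \<Longrightarrow> y \<otimes> z = z \<otimes> y"
    and rho_square_in_A: "a \<otimes> a \<in> A"
    and rotation_pow_in_A: "(a \<otimes> b) [^] r \<in> A"
    and r_pos: "r \<ge> 1"
begin

lemma A_subset: "A \<subseteq> carrier G"
  using normal_A by (simp add: normal_imp_subgroup subgroup.subset)

lemma A_subgroup: "subgroup A G"
  using normal_A by (simp add: normal_imp_subgroup)

lemma A_carrier: "y \<in> A \<Longrightarrow> y \<in> carrier G"
  using A_subset by auto

lemma rotation_closed [simp]: "a \<otimes> b \<in> carrier G"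
  using gens_closed by simp

lemma inv_tau: "inv b = b"
  using gens_closed tau_involution by (simp add: inv_equality)

lemma conj_by_in_A: "g \<in> carrier G \<Longrightarrow> y \<in> A \<Longrightarrow> conj_by G g y \<in> A"
  using normal_A by (simp add: normal_inv_iff conj_by_def)

lemma conj_by_A_trivial: "z \<in> A \<Longrightarrow> y \<in> A \<Longrightarrow> conj_by G z y = y"
proof -
  assume z: "z \<in> A" and y: "y \<in> A"
  have zc: "z \<in> carrier G" and yc: "y \<in> carrier G" using z y A_carrier by auto
  have "conj_by G z y = y \<otimes> z \<otimes> inv z" using A_comm[OF y z] by (simp add: conj_by_def)
  also have "\<dots> = y" using zc yc by (simp add: m_assoc)
  finally show ?thesis .
qed

lemma conj_by_inv_rotation: "y \<in> A \<Longrightarrow> conj_by G (inv (a \<otimes> b)) y = conj_by G ((a \<otimes> b) [^] (r - 1)) y"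
proof -
  assume y: "y \<in> A"
  define x where "x = a \<otimes> b"
  have x: "x \<in> carrier G" by (simp add: x_def)
  have rr: "r = Suc (r - 1)" using r_pos by simp
  have xr: "x [^] r = x [^] (r - 1) \<otimes> x" using rr x nat_pow_Suc[of x "r - 1"] by metis
  have "inv (x [^] r) \<otimes> x [^] (r - 1) = inv x"
    using x by (simp add: xr inv_mult_group m_assoc)
  then have "conj_by G (inv x) y = conj_by G (inv (x [^] r)) (conj_by G (x [^] (r - 1)) y)"
    using x y A_carrier by (simp add: conj_by_conj_by)
  also have "\<dots> = conj_by G (x [^] (r - 1)) y"
  proof -
    have "inv (x [^] r) \<in> A"
      using rotation_pow_in_A A_subgroup by (simp add: x_def subgroup.m_inv_closed)
    moreover have "conj_by G (x [^] (r - 1)) y \<in> A" using conj_by_in_A x y by simp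
    ultimately show ?thesis by (rule conj_by_A_trivial)
  qed
  finally show ?thesis by (simp add: x_def)
qed

lemma rho_rotation: "a \<otimes> (a \<otimes> b) = (a \<otimes> a) \<otimes> inv (a \<otimes> b) \<otimes> a"
  using gens_closed by (simp add: inv_mult_group inv_tau m_assoc)

lemma tau_rotation: "b \<otimes> (a \<otimes> b) = inv (a \<otimes> b) \<otimes> (a \<otimes> a) \<otimes> b"
  using gens_closed by (simp add: inv_mult_group inv_tau m_assoc)

text \<open>Modulo the abelian group \<open>A\<close> both generators invert the rotation \<open>x = a \<otimes> b\<close>, and \<open>x\<^sup>-\<^sup>1\<close> acts on
  \<open>A\<close> as \<open>x\<^sup>r\<^sup>-\<^sup>1\<close>.\<close>

lemma conj_by_gen_rotation:
  assumes g: "g = a \<or> g = b" and y: "y \<in> A"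
  shows "conj_by G g (conj_by G (a \<otimes> b) y) = conj_by G ((a \<otimes> b) [^] (r - 1)) (conj_by G g y)"
proof -
  have gc: "g \<in> carrier G" using g gens_closed by auto
  have yc: "y \<in> carrier G" using y A_carrier by simp
  have gy: "conj_by G g y \<in> A" using conj_by_in_A gc y by simp
  have "conj_by G g (conj_by G (a \<otimes> b) y) = conj_by G (inv (a \<otimes> b)) (conj_by G g y)"
    using g
  proof
    assume ga: "g = a"
    have "conj_by G g (conj_by G (a \<otimes> b) y) = conj_by G ((a \<otimes> a) \<otimes> inv (a \<otimes> b) \<otimes> a) y"
      using ga gc yc by (simp add: conj_by_conj_by rho_rotation)
    also have "\<dots> = conj_by G (a \<otimes> a) (conj_by G (inv (a \<otimes> b)) (conj_by G a y))"
      using gens_closed yc by (simp add: conj_by_conj_by m_assoc)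
    also have "\<dots> = conj_by G (inv (a \<otimes> b)) (conj_by G g y)"
      using ga gy rho_square_in_A conj_by_in_A conj_by_A_trivial by simp
    finally show ?thesis .
  next
    assume gb: "g = b"
    have "conj_by G g (conj_by G (a \<otimes> b) y) = conj_by G (inv (a \<otimes> b) \<otimes> (a \<otimes> a) \<otimes> b) y"
      using gb gc yc by (simp add: conj_by_conj_by tau_rotation)
    also have "\<dots> = conj_by G (inv (a \<otimes> b)) (conj_by G (a \<otimes> a) (conj_by G b y))"
      using gens_closed yc by (simp add: conj_by_conj_by m_assoc)
    also have "\<dots> = conj_by G (inv (a \<otimes> b)) (conj_by G g y)"
      using gb gy rho_square_in_A conj_by_A_trivial by simp
    finally show ?thesis .
  qed
  also have "\<dots> = conj_by G ((a \<otimes> b) [^] (r - 1)) (conj_by G g y)"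
    using conj_by_inv_rotation gy by simp
  finally show ?thesis .
qed

lemma conj_by_gen_rotation_pow:
  assumes g: "g = a \<or> g = b" and y: "y \<in> A"
  shows "conj_by G g (conj_by G ((a \<otimes> b) [^] (i::nat)) y)
    = conj_by G ((a \<otimes> b) [^] ((r - 1) * i)) (conj_by G g y)"
proof (induction i)
  case 0
  then show ?case using g gens_closed y A_carrier by auto
next
  case (Suc i)
  have gc: "g \<in> carrier G" using g gens_closed by auto
  have yc: "y \<in> carrier G" using y A_carrier by simp
  have xi: "conj_by G ((a \<otimes> b) [^] i) y \<in> A" using conj_by_in_A y by simp
  have "conj_by G ((a \<otimes> b) [^] Suc i) y = conj_by G (a \<otimes> b) (conj_by G ((a \<otimes> b) [^] i) y)"
    using conj_by_pow_pow[of "a \<otimes> b" y 1 i] yc by simp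
  then have "conj_by G g (conj_by G ((a \<otimes> b) [^] Suc i) y)
      = conj_by G ((a \<otimes> b) [^] (r - 1)) (conj_by G g (conj_by G ((a \<otimes> b) [^] i) y))"
    using conj_by_gen_rotation[OF g xi] by simp
  also have "\<dots> = conj_by G ((a \<otimes> b) [^] (r - 1)) (conj_by G ((a \<otimes> b) [^] ((r - 1) * i)) (conj_by G g y))"
    using Suc by simp
  also have "\<dots> = conj_by G ((a \<otimes> b) [^] ((r - 1) * Suc i)) (conj_by G g y)"
    using gc yc by (simp add: conj_by_pow_pow add.commute)
  finally show ?case .
qed

lemma orbit_prod_in_A: "e \<in> A \<Longrightarrow> orbit_prod G (a \<otimes> b) e ls \<in> A"
proof (induction ls)
  case Nil then show ?case using A_subgroup by (simp add: subgroup.one_closed)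
next
  case (Cons i ls)
  then show ?case using conj_by_in_A A_subgroup by (simp add: subgroup.m_closed)
qed

lemma conj_by_gen_orbit_prod_in_span:
  assumes g: "g = a \<or> g = b" and e: "e \<in> A" and ge: "conj_by G g e \<in> range (orbit_prod G (a \<otimes> b) e)"
  shows "conj_by G g (orbit_prod G (a \<otimes> b) e ls) \<in> range (orbit_prod G (a \<otimes> b) e)"
proof (induction ls)
  case Nil then show ?case using g gens_closed by (metis conj_by_one rangeI orbit_prod.simps(1))
next
  case (Cons i ls)
  have gc: "g \<in> carrier G" using g gens_closed by auto
  have ec: "e \<in> carrier G" using e A_carrier by simp
  obtain js where js: "conj_by G g e = orbit_prod G (a \<otimes> b) e js" using ge by auto
  obtain ks where ks: "conj_by G g (orbit_prod G (a \<otimes> b) e ls) = orbit_prod G (a \<otimes> b) e ks"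
    using Cons by auto
  have "conj_by G g (orbit_prod G (a \<otimes> b) e (i # ls))
      = conj_by G g (conj_by G ((a \<otimes> b) [^] i) e) \<otimes> conj_by G g (orbit_prod G (a \<otimes> b) e ls)"
    using gc ec by (simp add: conj_by_mult)
  also have "\<dots> = conj_by G ((a \<otimes> b) [^] ((r - 1) * i)) (orbit_prod G (a \<otimes> b) e js)
      \<otimes> orbit_prod G (a \<otimes> b) e ks"
    using conj_by_gen_rotation_pow[OF g e] js ks by simp
  also have "\<dots> = orbit_prod G (a \<otimes> b) e (map (\<lambda>j. (r - 1) * i + j) js @ ks)"
    using ec by (simp add: conj_by_orbit_prod orbit_prod_append)
  finally show ?case by (metis rangeI)
qed

lemma orbit_span_subgroup:
  assumes e: "e \<in> A"
  shows "subgroup (range (orbit_prod G (a \<otimes> b) e)) G"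
proof (rule subgroupI)
  have ec: "e \<in> carrier G" using e A_carrier by simp
  show "range (orbit_prod G (a \<otimes> b) e) \<subseteq> carrier G" using ec by auto
  show "range (orbit_prod G (a \<otimes> b) e) \<noteq> {}" by simp
  show "y \<otimes> z \<in> range (orbit_prod G (a \<otimes> b) e)"
    if yz: "y \<in> range (orbit_prod G (a \<otimes> b) e)" "z \<in> range (orbit_prod G (a \<otimes> b) e)" for y z
  proof -
    obtain ls where "y = orbit_prod G (a \<otimes> b) e ls" using yz(1) by auto
    moreover obtain js where "z = orbit_prod G (a \<otimes> b) e js" using yz(2) by auto
    ultimately have "y \<otimes> z = orbit_prod G (a \<otimes> b) e (ls @ js)"
      using ec by (simp add: orbit_prod_append)
    then show ?thesis by simp
  qed
  show "inv y \<in> range (orbit_prod G (a \<otimes> b) e)" if y: "y \<in> range (orbit_prod G (a \<otimes> b) e)" for y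
  proof -
    have yc: "y \<in> carrier G" using y ec by auto
    have "order G \<ge> 1" using finite_carrier by (simp add: order_gt_0_iff_finite Suc_le_eq)
    then have "y [^] (order G - 1) \<otimes> y = y [^] order G"
      using yc nat_pow_Suc[of y "order G - 1"] by simp
    then have "y [^] (order G - 1) \<otimes> y = \<one>" using pow_order_eq_1[OF yc] by simp
    then have "inv y = y [^] (order G - 1)" using yc by (simp add: inv_equality)
    then show ?thesis using pow_in_range_orbit_prod[OF rotation_closed ec y] by simp
  qed
qed

lemma orbit_span_normal:
  assumes e: "e \<in> A" and ae: "conj_by G a e \<in> range (orbit_prod G (a \<otimes> b) e)"
    and be: "conj_by G b e \<in> range (orbit_prod G (a \<otimes> b) e)"
  shows "range (orbit_prod G (a \<otimes> b) e) \<lhd> G"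
proof (rule normal_if_conj_closed_generators[OF finite_carrier carrier_eq_range gens_closed
      orbit_span_subgroup[OF e]])
  fix l assume "l \<in> range (orbit_prod G (a \<otimes> b) e)"
  then obtain ls where l: "l = orbit_prod G (a \<otimes> b) e ls" by auto
  show "a \<otimes> l \<otimes> inv a \<in> range (orbit_prod G (a \<otimes> b) e)"
    using conj_by_gen_orbit_prod_in_span[OF _ e ae, of ls] l by (simp add: conj_by_def)
  show "b \<otimes> l \<otimes> inv b \<in> range (orbit_prod G (a \<otimes> b) e)"
    using conj_by_gen_orbit_prod_in_span[OF _ e be, of ls] l by (simp add: conj_by_def)
qed

lemma orbit_prod_mult:
  "y \<in> A \<Longrightarrow> z \<in> A \<Longrightarrow> orbit_prod G (a \<otimes> b) (y \<otimes> z) ls = orbit_prod G (a \<otimes> b) y ls \<otimes> orbit_prod G (a \<otimes> b) z ls"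
proof (induction ls)
  case Nil then show ?case by simp
next
  case (Cons i ls)
  define p1 where "p1 = conj_by G ((a \<otimes> b) [^] i) y"
  define p2 where "p2 = conj_by G ((a \<otimes> b) [^] i) z"
  define s1 where "s1 = orbit_prod G (a \<otimes> b) y ls"
  define s2 where "s2 = orbit_prod G (a \<otimes> b) z ls"
  have inA: "p1 \<in> A" "p2 \<in> A" "s1 \<in> A" "s2 \<in> A"
    using Cons.prems conj_by_in_A orbit_prod_in_A by (auto simp: p1_def p2_def s1_def s2_def)
  have c: "p1 \<in> carrier G" "p2 \<in> carrier G" "s1 \<in> carrier G" "s2 \<in> carrier G"
    using inA A_carrier by auto
  have "orbit_prod G (a \<otimes> b) (y \<otimes> z) (i # ls) = (p1 \<otimes> p2) \<otimes> (s1 \<otimes> s2)"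
    using Cons A_carrier by (simp add: conj_by_mult p1_def p2_def s1_def s2_def)
  also have "\<dots> = p1 \<otimes> (p2 \<otimes> s1) \<otimes> s2" using c by (simp add: m_assoc)
  also have "\<dots> = p1 \<otimes> (s1 \<otimes> p2) \<otimes> s2" using A_comm[OF inA(2) inA(3)] by simp
  also have "\<dots> = (p1 \<otimes> s1) \<otimes> (p2 \<otimes> s2)" using c by (simp add: m_assoc)
  finally show ?case by (simp add: p1_def p2_def s1_def s2_def)
qed

lemma orbit_prod_conj_by:
  "y \<in> A \<Longrightarrow> orbit_prod G (a \<otimes> b) (conj_by G ((a \<otimes> b) [^] (j::nat)) y) ls
     = conj_by G ((a \<otimes> b) [^] j) (orbit_prod G (a \<otimes> b) y ls)"
proof (induction ls)
  case Nil then show ?case by simp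
next
  case (Cons i ls)
  have yc: "y \<in> carrier G" using Cons.prems A_carrier by simp
  have "conj_by G ((a \<otimes> b) [^] i) (conj_by G ((a \<otimes> b) [^] j) y)
      = conj_by G ((a \<otimes> b) [^] j) (conj_by G ((a \<otimes> b) [^] i) y)"
    using yc by (simp add: conj_by_pow_pow add.commute)
  then show ?case using Cons yc by (simp add: conj_by_mult)
qed

lemma orbit_prod_orbit_prod_eq_one:
  assumes e: "e \<in> A" and one: "orbit_prod G (a \<otimes> b) e ls = \<one>"
  shows "orbit_prod G (a \<otimes> b) (orbit_prod G (a \<otimes> b) e js) ls = \<one>"
proof (induction js)
  case Nil
  have "orbit_prod G (a \<otimes> b) \<one> ls = \<one>"
    by (induction ls) auto
  then show ?case by simp
next
  case (Cons j js)
  have c1: "conj_by G ((a \<otimes> b) [^] j) e \<in> A" using conj_by_in_A e by simp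
  have c2: "orbit_prod G (a \<otimes> b) e js \<in> A" using orbit_prod_in_A e by simp
  have "orbit_prod G (a \<otimes> b) (orbit_prod G (a \<otimes> b) e (j # js)) ls =
        orbit_prod G (a \<otimes> b) (conj_by G ((a \<otimes> b) [^] j) e) ls
        \<otimes> orbit_prod G (a \<otimes> b) (orbit_prod G (a \<otimes> b) e js) ls"
    using orbit_prod_mult[OF c1 c2] by simp
  also have "\<dots> = conj_by G ((a \<otimes> b) [^] j) \<one> \<otimes> \<one>"
    using orbit_prod_conj_by[OF e] one Cons by simp
  finally show ?case by simp
qed

lemma conj_by_rho_rho_square: "conj_by G a (a \<otimes> a) = a \<otimes> a"
  using gens_closed by (simp add: conj_by_def m_assoc)

lemma conj_by_tau_rho_square: "conj_by G b (a \<otimes> a) = conj_by G ((a \<otimes> b) [^] (r - 1)) (a \<otimes> a)"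
proof -
  have "conj_by G b (a \<otimes> a) = conj_by G (inv (a \<otimes> b)) (a \<otimes> a)"
    using gens_closed by (simp add: conj_by_def inv_mult_group inv_tau m_assoc)
  then show ?thesis using conj_by_inv_rotation rho_square_in_A by simp
qed

lemma conj_by_rotation_rotation_pow: "conj_by G (a \<otimes> b) ((a \<otimes> b) [^] r) = (a \<otimes> b) [^] r"
proof -
  have e: "(a \<otimes> b) \<otimes> (a \<otimes> b) [^] r = (a \<otimes> b) [^] r \<otimes> (a \<otimes> b)"
    using nat_pow_Suc2[of "a \<otimes> b" r] nat_pow_Suc[of "a \<otimes> b" r] by simp
  have "conj_by G (a \<otimes> b) ((a \<otimes> b) [^] r) = (a \<otimes> b) [^] r \<otimes> (a \<otimes> b) \<otimes> inv (a \<otimes> b)"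
    by (simp add: conj_by_def e)
  also have "\<dots> = (a \<otimes> b) [^] r" by (simp add: m_assoc)
  finally show ?thesis .
qed

lemma conj_by_rho_rotation: "conj_by G a (a \<otimes> b) = (a \<otimes> a) \<otimes> inv (a \<otimes> b)"
  using gens_closed by (simp add: conj_by_def rho_rotation m_assoc)

lemma conj_by_tau_rotation: "conj_by G b (a \<otimes> b) = inv (a \<otimes> b) \<otimes> (a \<otimes> a)"
  using gens_closed by (simp add: conj_by_def tau_rotation m_assoc)

lemma fixed_by_rotation_normal: "{y \<in> A. conj_by G (a \<otimes> b) y = y} \<lhd> G" (is "?F \<lhd> G")
proof (rule normal_if_conj_closed_generators[OF finite_carrier carrier_eq_range gens_closed])
  show "subgroup ?F G"
  proof (rule subgroupI)
    show "?F \<subseteq> carrier G" using A_carrier by auto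
    show "?F \<noteq> {}" using A_subgroup by (auto simp: subgroup.one_closed intro!: exI[of _ \<one>])
    show "inv y \<in> ?F" if "y \<in> ?F" for y
      using that A_subgroup A_carrier by (auto simp: subgroup.m_inv_closed conj_by_inv)
    show "y \<otimes> z \<in> ?F" if "y \<in> ?F" "z \<in> ?F" for y z
      using that A_subgroup A_carrier by (auto simp: subgroup.m_closed conj_by_mult)
  qed
  have conj_gen: "conj_by G g y \<in> ?F" if g: "g = a \<or> g = b" and y: "y \<in> ?F" for g y
  proof -
    have yA: "y \<in> A" and yx: "conj_by G (a \<otimes> b) y = y" using y by auto
    have gyA: "conj_by G g y \<in> A" using conj_by_in_A g gens_closed yA by auto
    have "conj_by G g y = conj_by G ((a \<otimes> b) [^] (r - 1)) (conj_by G g y)"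
      using conj_by_gen_rotation[OF g yA] yx by simp
    then have "conj_by G (a \<otimes> b) (conj_by G g y) = conj_by G ((a \<otimes> b) [^] (1 + (r - 1))) (conj_by G g y)"
      using conj_by_pow_pow[of "a \<otimes> b" "conj_by G g y" 1 "r - 1"] gyA A_carrier by simp
    also have "\<dots> = conj_by G ((a \<otimes> b) [^] r) (conj_by G g y)" using r_pos by simp
    also have "\<dots> = conj_by G g y" using conj_by_A_trivial[OF rotation_pow_in_A gyA] .
    finally show ?thesis using gyA by simp
  qed
  show "a \<otimes> l \<otimes> inv a \<in> ?F" "b \<otimes> l \<otimes> inv b \<in> ?F" if "l \<in> ?F" for l
    using conj_gen[OF _ that] by (simp_all add: conj_by_def)
qed

lemma fixed_by_rho_normal:
  assumes rotation_fixes: "\<And>y. y \<in> A \<Longrightarrow> conj_by G (a \<otimes> b) y = y"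
  shows "{y \<in> A. conj_by G a y = y} \<lhd> G" (is "?F \<lhd> G")
proof (rule normal_if_conj_closed_generators[OF finite_carrier carrier_eq_range gens_closed])
  show "subgroup ?F G"
  proof (rule subgroupI)
    show "?F \<subseteq> carrier G" using A_carrier by auto
    show "?F \<noteq> {}"
      using A_subgroup gens_closed by (auto simp: subgroup.one_closed intro!: exI[of _ \<one>])
    show "inv y \<in> ?F" if "y \<in> ?F" for y
      using that A_subgroup A_carrier gens_closed by (auto simp: subgroup.m_inv_closed conj_by_inv)
    show "y \<otimes> z \<in> ?F" if "y \<in> ?F" "z \<in> ?F" for y z
      using that A_subgroup A_carrier gens_closed by (auto simp: subgroup.m_closed conj_by_mult)
  qed
  show "a \<otimes> l \<otimes> inv a \<in> ?F" if "l \<in> ?F" for l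
    using that by (simp add: conj_by_def[symmetric])
  show "b \<otimes> l \<otimes> inv b \<in> ?F" if l: "l \<in> ?F" for l
  proof -
    have lA: "l \<in> A" and la: "conj_by G a l = l" using l by auto
    have lc: "l \<in> carrier G" using lA A_carrier by simp
    have "b = inv a \<otimes> (a \<otimes> b)" using gens_closed by simp
    then have "conj_by G b l = conj_by G (inv a) (conj_by G (a \<otimes> b) l)"
      using gens_closed lc by (simp add: conj_by_conj_by)
    also have "\<dots> = conj_by G (inv a) (conj_by G a l)" using rotation_fixes lA la by simp
    also have "\<dots> = l" using gens_closed lc by (simp add: conj_by_inv_conj_by)
    finally show ?thesis using l by (simp add: conj_by_def)
  qed
qed

lemma rho_square_commutes_inv_rotation:
  assumes rotation_fixes: "\<And>y. y \<in> A \<Longrightarrow> conj_by G (a \<otimes> b) y = y"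
  shows "(a \<otimes> a) \<otimes> inv (a \<otimes> b) = inv (a \<otimes> b) \<otimes> (a \<otimes> a)"
proof -
  have uc: "a \<otimes> a \<in> carrier G" using gens_closed by simp
  have e: "(a \<otimes> b) \<otimes> (a \<otimes> a) \<otimes> inv (a \<otimes> b) = a \<otimes> a"
    using rotation_fixes[OF rho_square_in_A] by (simp add: conj_by_def)
  have "inv (a \<otimes> b) \<otimes> (a \<otimes> a) = inv (a \<otimes> b) \<otimes> ((a \<otimes> b) \<otimes> (a \<otimes> a) \<otimes> inv (a \<otimes> b))"
    using e by simp
  also have "\<dots> = (a \<otimes> a) \<otimes> inv (a \<otimes> b)" using uc by (simp add: m_assoc)
  finally show ?thesis by simp
qed

text \<open>Conjugating \<open>v = (\<rho>\<tau>)\<^sup>r\<close> by \<open>\<rho>\<close> gives \<open>v = \<rho>\<^sup>2\<^sup>r v\<^sup>-\<^sup>1\<close>, so \<open>v\<^sup>2 = \<rho>\<^sup>2\<^sup>r\<close>, and \<open>v\<close> has odd order.\<close>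

lemma rotation_pow_eq_rho_square_pow:
  assumes rotation_fixes: "\<And>y. y \<in> A \<Longrightarrow> conj_by G (a \<otimes> b) y = y"
    and rho_fixes: "\<And>y. y \<in> A \<Longrightarrow> conj_by G a y = y"
    and exponent: "\<And>y. y \<in> A \<Longrightarrow> y [^] p = \<one>" and odd_p: "odd p"
  shows "(a \<otimes> b) [^] r = (a \<otimes> a) [^] (r * ((p + 1) div 2))"
proof -
  define x where "x = a \<otimes> b"
  define u where "u = a \<otimes> a"
  define v where "v = x [^] r"
  have c: "x \<in> carrier G" "u \<in> carrier G" "v \<in> carrier G"
    using gens_closed by (auto simp: x_def u_def v_def)
  have "v = conj_by G a v" using rho_fixes rotation_pow_in_A by (simp add: v_def x_def)
  also have "\<dots> = (conj_by G a x) [^] r" using gens_closed c by (simp add: v_def conj_by_pow)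
  also have "\<dots> = (u \<otimes> inv x) [^] r" by (simp add: conj_by_rho_rotation x_def u_def)
  also have "\<dots> = u [^] r \<otimes> (inv x) [^] r"
  proof -
    have comm: "u \<otimes> inv x = inv x \<otimes> u"
      using rho_square_commutes_inv_rotation[OF rotation_fixes] by (simp add: x_def u_def)
    show ?thesis by (rule pow_mult_distrib[OF comm]) (use c in auto)
  qed
  also have "\<dots> = u [^] r \<otimes> inv v" using c by (simp add: nat_pow_inv v_def)
  finally have "v = u [^] r \<otimes> inv v" .
  then have "v \<otimes> v = (u [^] r \<otimes> inv v) \<otimes> v" by (rule arg_cong[where f="\<lambda>z. z \<otimes> v"])
  then have vv: "v \<otimes> v = u [^] r" using c by (simp add: m_assoc)
  have "v [^] p = \<one>" using exponent rotation_pow_in_A by (simp add: v_def x_def)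
  then have "v [^] (p + 1) = v" using c by simp
  moreover have "p + 1 = 2 * ((p + 1) div 2)" using odd_p by simp
  ultimately have "v = (v [^] (2::nat)) [^] ((p + 1) div 2)" using c by (metis nat_pow_pow)
  also have "v [^] (2::nat) = v \<otimes> v" using c by (simp add: numeral_2_eq_2)
  finally show ?thesis using vv c by (simp add: nat_pow_pow v_def x_def u_def)
qed

lemma conj_by_gens_rotation_pow_eq_inv:
  assumes rho_square: "a \<otimes> a = \<one>"
  shows "conj_by G a ((a \<otimes> b) [^] r) = inv ((a \<otimes> b) [^] r)"
    and "conj_by G b ((a \<otimes> b) [^] r) = inv ((a \<otimes> b) [^] r)"
proof -
  show "conj_by G a ((a \<otimes> b) [^] r) = inv ((a \<otimes> b) [^] r)"
    using gens_closed by (simp add: conj_by_pow conj_by_rho_rotation rho_square nat_pow_inv)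
  show "conj_by G b ((a \<otimes> b) [^] r) = inv ((a \<otimes> b) [^] r)"
    using gens_closed by (simp add: conj_by_pow conj_by_tau_rotation rho_square nat_pow_inv)
qed

lemma rho_square_orbit_span:
  defines "S \<equiv> range (orbit_prod G (a \<otimes> b) (a \<otimes> a))"
  shows "a \<otimes> a \<in> S" "conj_by G a (a \<otimes> a) \<in> S" "conj_by G b (a \<otimes> a) \<in> S"
proof -
  show "a \<otimes> a \<in> S" unfolding S_def using gens_closed by (simp add: in_range_orbit_prod_self)
  then show "conj_by G a (a \<otimes> a) \<in> S" by (simp add: conj_by_rho_rho_square)
  have "conj_by G b (a \<otimes> a) = orbit_prod G (a \<otimes> b) (a \<otimes> a) [r - 1]"
    using gens_closed by (simp add: conj_by_tau_rho_square)
  then show "conj_by G b (a \<otimes> a) \<in> S" unfolding S_def by (metis rangeI)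
qed

lemma rotation_pow_orbit_span:
  defines "S \<equiv> range (orbit_prod G (a \<otimes> b) ((a \<otimes> b) [^] r))"
  assumes "a \<otimes> a = \<one>"
  shows "(a \<otimes> b) [^] r \<in> S" "conj_by G a ((a \<otimes> b) [^] r) \<in> S" "conj_by G b ((a \<otimes> b) [^] r) \<in> S"
    and "a \<otimes> a \<in> S"
proof -
  show v: "(a \<otimes> b) [^] r \<in> S" unfolding S_def by (simp add: in_range_orbit_prod_self)
  have "inv ((a \<otimes> b) [^] r) \<in> S"
    using subgroup.m_inv_closed[OF orbit_span_subgroup[OF rotation_pow_in_A] v[unfolded S_def]]
    by (simp add: S_def)
  then show "conj_by G a ((a \<otimes> b) [^] r) \<in> S" "conj_by G b ((a \<otimes> b) [^] r) \<in> S"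
    using conj_by_gens_rotation_pow_eq_inv[OF assms(2)] by simp_all
  show "a \<otimes> a \<in> S" unfolding S_def assms(2) by (metis orbit_prod.simps(1) rangeI)
qed

end

section \<open>Irreducible presentations\<close>

text \<open>The data of \<open>\<int>\<^sub>p\<^sup>d \<rtimes>\<^sub>\<psi> D\<^sub>2\<^sub>r\<close> that are used: \<open>K = \<int>\<^sub>p\<^sup>d\<close> is a minimal normal subgroup of
  exponent \<open>p\<close> and index \<open>2r\<close>.\<close>

locale irreducible_presentation = abelian_by_dihedral G a b r K for G (structure) and a b r K +
  fixes p :: nat
  assumes odd_p: "odd p" and coprime_p: "coprime p (2 * r)"
    and K_exponent: "\<And>y. y \<in> K \<Longrightarrow> y [^] p = \<one>"
    and K_minimal: "\<And>L. L \<lhd> G \<Longrightarrow> L \<subseteq> K \<Longrightarrow> L = {\<one>} \<or> L = K"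
    and K_nontrivial: "K \<noteq> {\<one>}"
    and card_carrier: "card (carrier G) = 2 * r * card K"
begin

lemma finite_K: "finite K"
  using finite_carrier A_subset finite_subset by auto

lemma rho_square_or_rotation_pow_nontrivial: "\<not> (a \<otimes> a = \<one> \<and> (a \<otimes> b) [^] r = \<one>)"
proof
  assume h: "a \<otimes> a = \<one> \<and> (a \<otimes> b) [^] r = \<one>"
  obtain y where y: "y \<in> K" "y \<noteq> \<one>"
    using K_nontrivial A_subgroup subgroup.one_closed by fastforce
  have "card {\<one>, y} \<le> card K"
    using y A_subgroup finite_K by (intro card_mono) (auto simp: subgroup.one_closed)
  then have "card K \<ge> 2" using y by simp
  moreover have "card (carrier G) \<le> 2 * r * card {\<one>}"
    using card_le_dihedral_index[OF finite_carrier carrier_eq_range gens_closed tau_involution one_is_normal]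
      h r_pos by simp
  ultimately show False using card_carrier r_pos by simp
qed

lemma rotation_pow_eq_one_if_not_fixed:
  assumes "\<not> (\<forall>y\<in>K. conj_by G (a \<otimes> b) y = y)"
  shows "(a \<otimes> b) [^] r = \<one>"
proof -
  have "{y \<in> K. conj_by G (a \<otimes> b) y = y} = {\<one>}"
    using K_minimal[OF fixed_by_rotation_normal] assms by auto
  moreover have "(a \<otimes> b) [^] r \<in> {y \<in> K. conj_by G (a \<otimes> b) y = y}"
    using rotation_pow_in_A conj_by_rotation_rotation_pow by simp
  ultimately show ?thesis by auto
qed

lemma rho_square_eq_one_if_not_fixed:
  assumes "\<forall>y\<in>K. conj_by G (a \<otimes> b) y = y" "\<not> (\<forall>y\<in>K. conj_by G a y = y)"
  shows "a \<otimes> a = \<one>"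
proof -
  have "{y \<in> K. conj_by G a y = y} = {\<one>}"
    using K_minimal[OF fixed_by_rho_normal[OF assms(1)[rule_format]]] assms(2) by auto
  moreover have "a \<otimes> a \<in> {y \<in> K. conj_by G a y = y}"
    using rho_square_in_A conj_by_rho_rho_square by simp
  ultimately show ?thesis by auto
qed

end

lemma irreducible_PX_map_presentation:
  assumes irr: "irreducible_rotary_augmented_PX_map p r (G, a, b)"
    and p: "Factorial_Ring.prime p" "odd p" and r: "r \<ge> 3" and pr: "\<not> p dvd r"
  shows "\<exists>K. irreducible_presentation G a b r K p"
proof -
  have aug: "augmented_PX_map p r (G, a, b)"
    using irr by (simp add: irreducible_rotary_augmented_PX_map_def)
  have rd: "rotary_datum (G, a, b)" using aug by (simp add: augmented_PX_map_def)
  interpret G: group G using rd by (simp add: rotary_datum_def)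
  have fin: "finite (carrier G)" and ab: "a \<in> carrier G" "b \<in> carrier G"
    and bb: "b \<otimes>\<^bsub>G\<^esub> b = \<one>\<^bsub>G\<^esub>"
    using rd by (auto simp: rotary_datum_def)
  have gen: "carrier G = range (eval_word G a b)"
    using rotary_datum_imp_rmap_generated[OF rd] by (simp add: rmap_generated_def)
  obtain K D where K: "K \<lhd> G" and K1: "K \<noteq> {\<one>\<^bsub>G\<^esub>}"
    and Kc: "\<forall>x\<in>K. \<forall>y\<in>K. x \<otimes>\<^bsub>G\<^esub> y = y \<otimes>\<^bsub>G\<^esub> x" and Kp: "\<forall>x\<in>K. x [^]\<^bsub>G\<^esub> p = \<one>\<^bsub>G\<^esub>"
    and D: "subgroup D G" and KD: "K \<inter> D = {\<one>\<^bsub>G\<^esub>}" and KDG: "K <#>\<^bsub>G\<^esub> D = carrier G"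
    and Dd: "G\<lparr>carrier := D\<rparr> \<cong> dihedral_group r"
    and Kmin: "\<forall>L. L \<lhd> G \<longrightarrow> L \<subseteq> K \<longrightarrow> L = {\<one>\<^bsub>G\<^esub>} \<or> L = K"
    using irr by (auto simp: irreducible_rotary_augmented_PX_map_def irreducible_PX_group_def)
  have "card D = 2 * r"
    using iso_same_card[OF Dd] by (simp add: dihedral_group_def card_cartesian_product)
  then have cG: "card (carrier G) = 2 * r * card K"
    using card_set_mult_eq[OF G.is_group normal_imp_subgroup[OF K] D KD] KDG by simp
  have cop: "coprime p (2 * r)" using coprime_double_if_odd_prime[OF p pr] .
  moreover have "(a \<otimes>\<^bsub>G\<^esub> a) [^]\<^bsub>G\<^esub> p = \<one>\<^bsub>G\<^esub>"
  proof -
    have "a \<otimes>\<^bsub>G\<^esub> a = a [^]\<^bsub>G\<^esub> (2::nat)" using ab by (simp add: numeral_2_eq_2)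
    then have "(a \<otimes>\<^bsub>G\<^esub> a) [^]\<^bsub>G\<^esub> p = a [^]\<^bsub>G\<^esub> (2 * p)" using ab by (simp add: G.nat_pow_pow)
    then show ?thesis
      using augmented_PX_map_rotation_pow[OF aug] r prime_gt_0_nat[OF p(1)] by simp
  qed
  ultimately have aa: "a \<otimes>\<^bsub>G\<^esub> a \<in> K"
    using G.in_normal_if_pow_prime_eq_one[OF fin K cG] ab by simp
  have K_comm: "\<And>y z. y \<in> K \<Longrightarrow> z \<in> K \<Longrightarrow> y \<otimes>\<^bsub>G\<^esub> z = z \<otimes>\<^bsub>G\<^esub> y" using Kc by blast
  have "(a \<otimes>\<^bsub>G\<^esub> b) [^]\<^bsub>G\<^esub> r \<in> K"
    by (rule G.rotation_pow_in_normal[OF fin gen ab bb K cG r aa])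
  then have "irreducible_presentation G a b r K p"
    using p(2) cop Kp Kmin K1 cG r
    by (intro irreducible_presentation.intro abelian_by_dihedral.intro abelian_by_dihedral_axioms.intro
        irreducible_presentation_axioms.intro G.is_group ab bb fin gen K K_comm aa) auto
  then show ?thesis by blast
qed

section \<open>The diagonal subgroup of two presentations\<close>

lemma fixed_points_iff_if_intertwined:
  assumes "bij_betw \<theta> A B" and "\<And>y. y \<in> A \<Longrightarrow> f y \<in> A" and "\<And>y. y \<in> A \<Longrightarrow> \<theta> (f y) = g (\<theta> y)"
  shows "(\<forall>y\<in>A. f y = y) \<longleftrightarrow> (\<forall>z\<in>B. g z = z)"
proof
  assume "\<forall>y\<in>A. f y = y"
  then show "\<forall>z\<in>B. g z = z" using assms(1,3) by (auto simp: bij_betw_def)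
next
  assume "\<forall>z\<in>B. g z = z"
  then show "\<forall>y\<in>A. f y = y" using assms by (auto simp: bij_betw_def inj_on_def)
qed

lemma nat_pow_DirProd: "(x, y) [^]\<^bsub>G1 \<times>\<times> G2\<^esub> (n::nat) = (x [^]\<^bsub>G1\<^esub> n, y [^]\<^bsub>G2\<^esub> n)"
  by (induction n) auto

text \<open>\<open>diag\<close> is the group of the product of the two maps.\<close>

locale diagonal_pair =
  P1: irreducible_presentation G1 a1 b1 r K1 p + P2: irreducible_presentation G2 a2 b2 r K2 p
  for G1 :: "('a, 'c) monoid_scheme" and a1 b1 r K1
  and G2 :: "('b, 'd) monoid_scheme" and a2 b2 K2 p
begin

definition diag_carrier where "diag_carrier = range (eval_word (G1 \<times>\<times> G2) (a1, a2) (b1, b2))"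
definition diag where "diag = (G1 \<times>\<times> G2)\<lparr>carrier := diag_carrier\<rparr>"
definition diag_kernel where "diag_kernel = {t \<in> diag_carrier. fst t \<in> K1 \<and> snd t \<in> K2}"

lemma group_DirProd: "group (G1 \<times>\<times> G2)"
  by (simp add: DirProd_group P1.is_group P2.is_group)

lemma gens_in_DirProd: "(a1, a2) \<in> carrier (G1 \<times>\<times> G2)" "(b1, b2) \<in> carrier (G1 \<times>\<times> G2)"
  using P1.gens_closed P2.gens_closed by auto

lemma eval_word_pair:
  "eval_word (G1 \<times>\<times> G2) (a1, a2) (b1, b2) w = (eval_word G1 a1 b1 w, eval_word G2 a2 b2 w)"
  using eval_word_DirProd[OF P1.is_group P2.is_group P1.gens_closed P2.gens_closed] .

lemma subgroup_diag_carrier: "subgroup diag_carrier (G1 \<times>\<times> G2)"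
proof -
  interpret T0: group "G1 \<times>\<times> G2" by (rule group_DirProd)
  have "diag_carrier = generate (G1 \<times>\<times> G2) {(a1, a2), (b1, b2)}"
    unfolding diag_carrier_def using T0.generate_eq_range_eval_word[OF gens_in_DirProd] by simp
  then show ?thesis using gens_in_DirProd by (simp add: T0.generate_is_subgroup)
qed

lemma diag_carrier_components: "t \<in> diag_carrier \<Longrightarrow> fst t \<in> carrier G1 \<and> snd t \<in> carrier G2"
  unfolding diag_carrier_def eval_word_pair
    using P1.eval_word_closed P2.eval_word_closed P1.gens_closed P2.gens_closed by auto

lemma group_diag: "group diag"
  unfolding diag_def
    using subgroup_diag_carrier by (rule group.subgroup_imp_group[OF group_DirProd])

lemma carrier_diag [simp]: "carrier diag = diag_carrier"
  by (simp add: diag_def)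

lemma mult_diag: "t \<otimes>\<^bsub>diag\<^esub> s = (fst t \<otimes>\<^bsub>G1\<^esub> fst s, snd t \<otimes>\<^bsub>G2\<^esub> snd s)"
  by (simp add: diag_def mult_DirProd')

lemma one_diag [simp]: "\<one>\<^bsub>diag\<^esub> = (\<one>\<^bsub>G1\<^esub>, \<one>\<^bsub>G2\<^esub>)"
  by (simp add: diag_def)

lemma inv_diag: "t \<in> diag_carrier \<Longrightarrow> inv\<^bsub>diag\<^esub> t = (inv\<^bsub>G1\<^esub> fst t, inv\<^bsub>G2\<^esub> snd t)"
proof -
  assume t: "t \<in> diag_carrier"
  have "inv\<^bsub>diag\<^esub> t = inv\<^bsub>G1 \<times>\<times> G2\<^esub> t"
    unfolding diag_def using group.m_inv_consistent[OF group_DirProd subgroup_diag_carrier t] .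
  also have "\<dots> = (inv\<^bsub>G1\<^esub> fst t, inv\<^bsub>G2\<^esub> snd t)"
    using diag_carrier_components[OF t] inv_DirProd[OF P1.is_group P2.is_group, of "fst t" "snd t"]
    by simp
  finally show ?thesis .
qed

lemma pow_diag: "t [^]\<^bsub>diag\<^esub> (n::nat) = (fst t [^]\<^bsub>G1\<^esub> n, snd t [^]\<^bsub>G2\<^esub> n)"
proof -
  have "t [^]\<^bsub>diag\<^esub> n = t [^]\<^bsub>G1 \<times>\<times> G2\<^esub> n"
    unfolding diag_def
      using monoid.nat_pow_consistent[OF group.is_monoid[OF group_DirProd]] by metis
  also have "\<dots> = (fst t [^]\<^bsub>G1\<^esub> n, snd t [^]\<^bsub>G2\<^esub> n)"
    using nat_pow_DirProd[of G1 G2 "fst t" "snd t" n] by simp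
  finally show ?thesis .
qed

lemma gens_in_diag_carrier: "(a1, a2) \<in> diag_carrier" "(b1, b2) \<in> diag_carrier"
  using group.generate_eq_range_eval_word[OF group_DirProd gens_in_DirProd]
  by (auto simp: diag_carrier_def intro: generate.incl)

lemma eval_word_diag:
  "eval_word diag (a1, a2) (b1, b2) w = eval_word (G1 \<times>\<times> G2) (a1, a2) (b1, b2) w"
  unfolding diag_def
    by (rule group.eval_word_subgroup[OF group_DirProd subgroup_diag_carrier gens_in_diag_carrier])

lemma conj_by_diag:
  "g \<in> diag_carrier \<Longrightarrow> y \<in> diag_carrier \<Longrightarrow>
     conj_by diag g y = (conj_by G1 (fst g) (fst y), conj_by G2 (snd g) (snd y))"
  by (simp add: conj_by_def mult_diag inv_diag)

lemma diag_carrier_mult_closed: "t \<in> diag_carrier \<Longrightarrow> s \<in> diag_carrier \<Longrightarrow> t \<otimes>\<^bsub>diag\<^esub> s \<in> diag_carrier"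
  using monoid.m_closed[OF group.is_monoid[OF group_diag]] by simp

lemma diag_carrier_pow_closed: "t \<in> diag_carrier \<Longrightarrow> t [^]\<^bsub>diag\<^esub> (n::nat) \<in> diag_carrier"
  using monoid.nat_pow_closed[OF group.is_monoid[OF group_diag]] by simp

lemma diag_carrier_inv_closed: "t \<in> diag_carrier \<Longrightarrow> inv\<^bsub>diag\<^esub> t \<in> diag_carrier"
  using group.inv_closed[OF group_diag] by simp

lemma orbit_prod_diag:
  "x \<in> diag_carrier \<Longrightarrow> e \<in> diag_carrier \<Longrightarrow>
     orbit_prod diag x e ls = (orbit_prod G1 (fst x) (fst e) ls, orbit_prod G2 (snd x) (snd e) ls)"
proof (induction ls)
  case Nil then show ?case by simp
next
  case (Cons i ls)
  have "x [^]\<^bsub>diag\<^esub> i \<in> diag_carrier" using diag_carrier_pow_closed Cons by simp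
  then have "conj_by diag (x [^]\<^bsub>diag\<^esub> i) e =
      (conj_by G1 (fst x [^]\<^bsub>G1\<^esub> i) (fst e), conj_by G2 (snd x [^]\<^bsub>G2\<^esub> i) (snd e))"
    using Cons by (simp add: conj_by_diag pow_diag)
  then show ?case using Cons by (simp add: mult_diag)
qed

lemma diag_kernel_normal: "diag_kernel \<lhd> diag"
proof -
  interpret T: group diag by (rule group_diag)
  have sub: "subgroup diag_kernel diag"
  proof (rule T.subgroupI)
    show "diag_kernel \<subseteq> carrier diag" by (auto simp: diag_kernel_def)
    show "diag_kernel \<noteq> {}"
    proof -
      have "\<one>\<^bsub>diag\<^esub> \<in> diag_carrier" using T.one_closed by simp
      then have "(\<one>\<^bsub>G1\<^esub>, \<one>\<^bsub>G2\<^esub>) \<in> diag_kernel"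
        using P1.A_subgroup P2.A_subgroup by (simp add: diag_kernel_def subgroup.one_closed)
      then show ?thesis by auto
    qed
    show "inv\<^bsub>diag\<^esub> t \<in> diag_kernel" if "t \<in> diag_kernel" for t
    proof -
      have t: "t \<in> diag_carrier" "fst t \<in> K1" "snd t \<in> K2"
        using that by (auto simp: diag_kernel_def)
      have "inv\<^bsub>diag\<^esub> t \<in> diag_carrier" using T.inv_closed t by simp
      then show ?thesis using t P1.A_subgroup P2.A_subgroup
        by (simp add: diag_kernel_def inv_diag subgroup.m_inv_closed)
    qed
    show "t \<otimes>\<^bsub>diag\<^esub> s \<in> diag_kernel" if "t \<in> diag_kernel" "s \<in> diag_kernel" for t s
    proof -
      have ts: "t \<in> diag_carrier" "s \<in> diag_carrier" "fst t \<in> K1" "snd t \<in> K2" "fst s \<in> K1" "snd s \<in> K2"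
        using that by (auto simp: diag_kernel_def)
      then show ?thesis using diag_carrier_mult_closed P1.A_subgroup P2.A_subgroup
        by (simp add: diag_kernel_def mult_diag subgroup.m_closed)
    qed
  qed
  show ?thesis unfolding T.normal_inv_iff
  proof (intro conjI sub ballI)
    fix g h assume g: "g \<in> carrier diag" and h: "h \<in> diag_kernel"
    have gC: "g \<in> diag_carrier" using g by simp
    have hC: "h \<in> diag_carrier" "fst h \<in> K1" "snd h \<in> K2" using h by (auto simp: diag_kernel_def)
    have "g \<otimes>\<^bsub>diag\<^esub> h \<otimes>\<^bsub>diag\<^esub> inv\<^bsub>diag\<^esub> g = conj_by diag g h" by (simp add: conj_by_def)
    also have "\<dots> = (conj_by G1 (fst g) (fst h), conj_by G2 (snd g) (snd h))"
      using gC hC by (simp add: conj_by_diag)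
    finally have e: "g \<otimes>\<^bsub>diag\<^esub> h \<otimes>\<^bsub>diag\<^esub> inv\<^bsub>diag\<^esub> g
        = (conj_by G1 (fst g) (fst h), conj_by G2 (snd g) (snd h))" .
    have "g \<otimes>\<^bsub>diag\<^esub> h \<otimes>\<^bsub>diag\<^esub> inv\<^bsub>diag\<^esub> g \<in> diag_carrier"
      using gC hC diag_carrier_mult_closed diag_carrier_inv_closed by simp
    then show "g \<otimes>\<^bsub>diag\<^esub> h \<otimes>\<^bsub>diag\<^esub> inv\<^bsub>diag\<^esub> g \<in> diag_kernel"
      using e diag_carrier_components[OF gC] hC P1.conj_by_in_A P2.conj_by_in_A
      by (simp add: diag_kernel_def)
  qed
qed

lemma rotation_diag: "(a1, a2) \<otimes>\<^bsub>diag\<^esub> (b1, b2) = (a1 \<otimes>\<^bsub>G1\<^esub> b1, a2 \<otimes>\<^bsub>G2\<^esub> b2)"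
  by (simp add: mult_diag)

lemma abelian_by_dihedral_diag: "abelian_by_dihedral diag (a1, a2) (b1, b2) r diag_kernel"
proof -
  interpret T: group diag by (rule group_diag)
  show ?thesis
  proof (rule abelian_by_dihedral.intro[OF group_diag], unfold abelian_by_dihedral_axioms_def,
      intro conjI allI impI)
    show "(a1, a2) \<in> carrier diag" "(b1, b2) \<in> carrier diag" using gens_in_diag_carrier by auto
    show "(b1, b2) \<otimes>\<^bsub>diag\<^esub> (b1, b2) = \<one>\<^bsub>diag\<^esub>"
      using P1.tau_involution P2.tau_involution by (simp add: mult_diag)
    show "finite (carrier diag)"
    proof -
      have "diag_carrier \<subseteq> carrier G1 \<times> carrier G2"
        using diag_carrier_components by (auto simp: mem_Times_iff)
      then show ?thesis using P1.finite_carrier P2.finite_carrier finite_subset by auto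
    qed
    show "carrier diag = range (eval_word diag (a1, a2) (b1, b2))"
      by (simp add: eval_word_diag diag_carrier_def)
    show "diag_kernel \<lhd> diag" by (rule diag_kernel_normal)
    fix y z assume yz: "y \<in> diag_kernel" "z \<in> diag_kernel"
    show "y \<otimes>\<^bsub>diag\<^esub> z = z \<otimes>\<^bsub>diag\<^esub> y"
      using yz P1.A_comm P2.A_comm by (auto simp: diag_kernel_def mult_diag)
  next
    show "(a1, a2) \<otimes>\<^bsub>diag\<^esub> (a1, a2) \<in> diag_kernel"
      using diag_carrier_mult_closed[OF gens_in_diag_carrier(1) gens_in_diag_carrier(1)]
        P1.rho_square_in_A P2.rho_square_in_A
        by (simp add: diag_kernel_def mult_diag)
    show "((a1, a2) \<otimes>\<^bsub>diag\<^esub> (b1, b2)) [^]\<^bsub>diag\<^esub> r \<in> diag_kernel"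
      using diag_carrier_pow_closed[OF diag_carrier_mult_closed[OF gens_in_diag_carrier]]
        P1.rotation_pow_in_A P2.rotation_pow_in_A
        by (simp add: diag_kernel_def mult_diag pow_diag)
    show "r \<ge> 1" by (rule P1.r_pos)
  qed
qed

end

context diagonal_pair
begin

abbreviation diag_span where
  "diag_span e \<equiv> range (orbit_prod diag ((a1, a2) \<otimes>\<^bsub>diag\<^esub> (b1, b2)) e)"

lemma fst_orbit_prod_diag:
  "e \<in> diag_carrier \<Longrightarrow>
     fst (orbit_prod diag ((a1, a2) \<otimes>\<^bsub>diag\<^esub> (b1, b2)) e ls) = orbit_prod G1 (a1 \<otimes>\<^bsub>G1\<^esub> b1) (fst e) ls"
  and snd_orbit_prod_diag:
  "e \<in> diag_carrier \<Longrightarrow>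
     snd (orbit_prod diag ((a1, a2) \<otimes>\<^bsub>diag\<^esub> (b1, b2)) e ls) = orbit_prod G2 (a2 \<otimes>\<^bsub>G2\<^esub> b2) (snd e) ls"
  using orbit_prod_diag[OF diag_carrier_mult_closed[OF gens_in_diag_carrier]]
  by (simp_all add: rotation_diag)

lemma relators_subset_if_card_diag_le:
  assumes "card diag_carrier \<le> card (carrier G1)"
  shows "relators G1 a1 b1 \<subseteq> relators G2 a2 b2"
proof
  have fin: "finite diag_carrier"
    using abelian_by_dihedral.finite_carrier[OF abelian_by_dihedral_diag] by simp
  have "fst ` diag_carrier = carrier G1"
    unfolding diag_carrier_def P1.carrier_eq_range by (auto simp: eval_word_pair image_iff)
  then have inj: "inj_on fst diag_carrier"
    using assms card_image_le[OF fin, of fst] by (intro eq_card_imp_inj_on[OF fin]) simp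
  fix w assume "w \<in> relators G1 a1 b1"
  moreover have "(eval_word G1 a1 b1 w, eval_word G2 a2 b2 w) \<in> diag_carrier"
    and "(eval_word G1 a1 b1 [], eval_word G2 a2 b2 []) \<in> diag_carrier"
    unfolding diag_carrier_def by (metis eval_word_pair rangeI)+
  ultimately show "w \<in> relators G2 a2 b2"
    using inj_onD[OF inj] by (fastforce simp: relators_def)
qed

text \<open>Projecting a submodule of the diagonal kernel that is normal in \<open>diag\<close> gives a normal subgroup of
  \<open>G\<^sub>1\<close>; by irreducibility it is all of \<open>K\<^sub>1\<close> as soon as it is nontrivial.\<close>

lemma fst_diag_span_eq_K1:
  assumes e: "e \<in> diag_kernel" and e1: "fst e \<noteq> \<one>\<^bsub>G1\<^esub>"
    and ca: "conj_by diag (a1, a2) e \<in> diag_span e" and cb: "conj_by diag (b1, b2) e \<in> diag_span e"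
  shows "range (orbit_prod G1 (a1 \<otimes>\<^bsub>G1\<^esub> b1) (fst e)) = K1"
proof -
  define V where "V = range (orbit_prod G1 (a1 \<otimes>\<^bsub>G1\<^esub> b1) (fst e))"
  have eC: "e \<in> diag_carrier" "fst e \<in> K1" using e by (auto simp: diag_kernel_def)
  have fst_in_V: "fst (conj_by diag g e) \<in> V" if "conj_by diag g e \<in> diag_span e" for g
    using that fst_orbit_prod_diag[OF eC(1)] by (auto simp: V_def)
  have "conj_by G1 a1 (fst e) \<in> V"
    using fst_in_V[OF ca] conj_by_diag[OF gens_in_diag_carrier(1) eC(1)] by simp
  moreover have "conj_by G1 b1 (fst e) \<in> V"
    using fst_in_V[OF cb] conj_by_diag[OF gens_in_diag_carrier(2) eC(1)] by simp
  ultimately have "V \<lhd> G1" unfolding V_def by (rule P1.orbit_span_normal[OF eC(2)])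
  moreover have "V \<subseteq> K1" unfolding V_def using P1.orbit_prod_in_A[OF eC(2)] by auto
  moreover have "fst e \<in> V"
    unfolding V_def using P1.A_carrier[OF eC(2)] by (simp add: P1.in_range_orbit_prod_self)
  ultimately have "V = K1" using P1.K_minimal e1 by blast
  then show ?thesis by (simp add: V_def)
qed

end

locale kernel_iso = diagonal_pair +
  fixes \<theta>
  assumes theta_bij: "bij_betw \<theta> K1 K2"
    and theta_mult: "\<And>y z. y \<in> K1 \<Longrightarrow> z \<in> K1 \<Longrightarrow> \<theta> (y \<otimes>\<^bsub>G1\<^esub> z) = \<theta> y \<otimes>\<^bsub>G2\<^esub> \<theta> z"
    and theta_conj_rho: "\<And>y. y \<in> K1 \<Longrightarrow> \<theta> (conj_by G1 a1 y) = conj_by G2 a2 (\<theta> y)"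
    and theta_conj_tau: "\<And>y. y \<in> K1 \<Longrightarrow> \<theta> (conj_by G1 b1 y) = conj_by G2 b2 (\<theta> y)"
begin

lemma theta_in_K2: "y \<in> K1 \<Longrightarrow> \<theta> y \<in> K2"
  using theta_bij by (auto simp: bij_betw_def)

lemma theta_one: "\<theta> \<one>\<^bsub>G1\<^esub> = \<one>\<^bsub>G2\<^esub>"
proof -
  have o: "\<one>\<^bsub>G1\<^esub> \<in> K1" using P1.A_subgroup by (simp add: subgroup.one_closed)
  have c: "\<theta> \<one>\<^bsub>G1\<^esub> \<in> carrier G2" using theta_in_K2[OF o] P2.A_carrier by simp
  have "\<theta> \<one>\<^bsub>G1\<^esub> \<otimes>\<^bsub>G2\<^esub> \<theta> \<one>\<^bsub>G1\<^esub> = \<theta> \<one>\<^bsub>G1\<^esub> \<otimes>\<^bsub>G2\<^esub> \<one>\<^bsub>G2\<^esub>"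
    using theta_mult[OF o o] c by simp
  then show ?thesis using c P2.l_cancel by blast
qed

lemma theta_conj_rotation:
  assumes z: "z \<in> K1"
  shows "\<theta> (conj_by G1 (a1 \<otimes>\<^bsub>G1\<^esub> b1) z) = conj_by G2 (a2 \<otimes>\<^bsub>G2\<^esub> b2) (\<theta> z)"
  using z P1.gens_closed P2.gens_closed theta_in_K2[OF z] P1.A_carrier P2.A_carrier
    theta_conj_rho[OF P1.conj_by_in_A[OF _ z]] theta_conj_tau[OF z]
  by (simp add: P1.conj_by_conj_by[symmetric] P2.conj_by_conj_by[symmetric])

lemma theta_conj_rotation_pow:
  fixes i :: nat
  assumes y: "y \<in> K1"
  shows "\<theta> (conj_by G1 ((a1 \<otimes>\<^bsub>G1\<^esub> b1) [^]\<^bsub>G1\<^esub> i) y) = conj_by G2 ((a2 \<otimes>\<^bsub>G2\<^esub> b2) [^]\<^bsub>G2\<^esub> i) (\<theta> y)"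
proof (induction i)
  case 0
  then show ?case using y P1.A_carrier theta_in_K2 P2.A_carrier by simp
next
  case (Suc i)
  have yc: "y \<in> carrier G1" and c2: "\<theta> y \<in> carrier G2"
    using y theta_in_K2 P1.A_carrier P2.A_carrier by auto
  have in1: "conj_by G1 ((a1 \<otimes>\<^bsub>G1\<^esub> b1) [^]\<^bsub>G1\<^esub> i) y \<in> K1" using P1.conj_by_in_A y by simp
  have "conj_by G1 ((a1 \<otimes>\<^bsub>G1\<^esub> b1) [^]\<^bsub>G1\<^esub> Suc i) y
      = conj_by G1 (a1 \<otimes>\<^bsub>G1\<^esub> b1) (conj_by G1 ((a1 \<otimes>\<^bsub>G1\<^esub> b1) [^]\<^bsub>G1\<^esub> i) y)"
    using P1.conj_by_pow_pow[of "a1 \<otimes>\<^bsub>G1\<^esub> b1" y 1 i] yc by simp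
  then have "\<theta> (conj_by G1 ((a1 \<otimes>\<^bsub>G1\<^esub> b1) [^]\<^bsub>G1\<^esub> Suc i) y)
      = conj_by G2 (a2 \<otimes>\<^bsub>G2\<^esub> b2) (conj_by G2 ((a2 \<otimes>\<^bsub>G2\<^esub> b2) [^]\<^bsub>G2\<^esub> i) (\<theta> y))"
    using theta_conj_rotation[OF in1] Suc by simp
  also have "\<dots> = conj_by G2 ((a2 \<otimes>\<^bsub>G2\<^esub> b2) [^]\<^bsub>G2\<^esub> Suc i) (\<theta> y)"
    using P2.conj_by_pow_pow[of "a2 \<otimes>\<^bsub>G2\<^esub> b2" "\<theta> y" 1 i] c2 by simp
  finally show ?case .
qed

lemma theta_orbit_prod:
  assumes y: "y \<in> K1"
  shows "\<theta> (orbit_prod G1 (a1 \<otimes>\<^bsub>G1\<^esub> b1) y ls) = orbit_prod G2 (a2 \<otimes>\<^bsub>G2\<^esub> b2) (\<theta> y) ls"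
proof (induction ls)
  case Nil
  then show ?case using theta_one by simp
next
  case (Cons i ls)
  have "conj_by G1 ((a1 \<otimes>\<^bsub>G1\<^esub> b1) [^]\<^bsub>G1\<^esub> i) y \<in> K1" "orbit_prod G1 (a1 \<otimes>\<^bsub>G1\<^esub> b1) y ls \<in> K1"
    using P1.conj_by_in_A P1.orbit_prod_in_A y by simp_all
  then have "\<theta> (orbit_prod G1 (a1 \<otimes>\<^bsub>G1\<^esub> b1) y (i # ls))
      = \<theta> (conj_by G1 ((a1 \<otimes>\<^bsub>G1\<^esub> b1) [^]\<^bsub>G1\<^esub> i) y) \<otimes>\<^bsub>G2\<^esub> \<theta> (orbit_prod G1 (a1 \<otimes>\<^bsub>G1\<^esub> b1) y ls)"
    using theta_mult by simp
  then show ?case using theta_conj_rotation_pow[OF y, of i] Cons by simp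
qed

lemma inj_on_fst_diag_span:
  assumes e: "e \<in> diag_kernel" and e1: "fst e \<noteq> \<one>\<^bsub>G1\<^esub>"
    and ca: "conj_by diag (a1, a2) e \<in> diag_span e" and cb: "conj_by diag (b1, b2) e \<in> diag_span e"
  shows "inj_on fst (diag_span e)"
proof (rule inj_onI)
  interpret T: abelian_by_dihedral diag "(a1, a2)" "(b1, b2)" r diag_kernel
    by (rule abelian_by_dihedral_diag)
  have eC: "e \<in> diag_carrier" "fst e \<in> K1" "snd e \<in> K2" using e by (auto simp: diag_kernel_def)
  have snd_one: "orbit_prod G2 (a2 \<otimes>\<^bsub>G2\<^esub> b2) (snd e) ls = \<one>\<^bsub>G2\<^esub>"
    if one: "orbit_prod G1 (a1 \<otimes>\<^bsub>G1\<^esub> b1) (fst e) ls = \<one>\<^bsub>G1\<^esub>" for ls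
  proof -
    obtain y where y: "y \<in> K1" "snd e = \<theta> y" using theta_bij eC(3) by (auto simp: bij_betw_def)
    then obtain js where "y = orbit_prod G1 (a1 \<otimes>\<^bsub>G1\<^esub> b1) (fst e) js"
      using fst_diag_span_eq_K1[OF e e1 ca cb] by blast
    then have "orbit_prod G1 (a1 \<otimes>\<^bsub>G1\<^esub> b1) y ls = \<one>\<^bsub>G1\<^esub>"
      using P1.orbit_prod_orbit_prod_eq_one[OF eC(2) one] by simp
    then show ?thesis using theta_orbit_prod[OF y(1), of ls] y(2) theta_one by simp
  qed
  have sub: "subgroup (diag_span e) diag" by (rule T.orbit_span_subgroup[OF e])
  fix l1 l2 assume l: "l1 \<in> diag_span e" "l2 \<in> diag_span e" "fst l1 = fst l2"
  have lc: "l1 \<in> diag_carrier" "l2 \<in> diag_carrier" using l subgroup.subset[OF sub] by auto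
  have "l1 \<otimes>\<^bsub>diag\<^esub> inv\<^bsub>diag\<^esub> l2 \<in> diag_span e"
    using l sub by (simp add: subgroup.m_closed subgroup.m_inv_closed)
  then obtain ls where ls: "l1 \<otimes>\<^bsub>diag\<^esub> inv\<^bsub>diag\<^esub> l2 = orbit_prod diag ((a1, a2) \<otimes>\<^bsub>diag\<^esub> (b1, b2)) e ls"
    by auto
  have c1: "fst l1 \<in> carrier G1" "fst l2 \<in> carrier G1" "snd l1 \<in> carrier G2" "snd l2 \<in> carrier G2"
    using diag_carrier_components lc by auto
  have f: "fst (l1 \<otimes>\<^bsub>diag\<^esub> inv\<^bsub>diag\<^esub> l2) = \<one>\<^bsub>G1\<^esub>"
    using lc l(3) c1 by (simp add: mult_diag inv_diag)
  then have "snd (l1 \<otimes>\<^bsub>diag\<^esub> inv\<^bsub>diag\<^esub> l2) = \<one>\<^bsub>G2\<^esub>"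
    using ls fst_orbit_prod_diag[OF eC(1)] snd_orbit_prod_diag[OF eC(1)] snd_one by simp
  with f have "l1 \<otimes>\<^bsub>diag\<^esub> inv\<^bsub>diag\<^esub> l2 = \<one>\<^bsub>diag\<^esub>" by (simp add: prod_eq_iff)
  then show "l1 = l2" using lc T.inv_equality T.inv_inv by (metis T.inv_closed T.r_inv carrier_diag)
qed

text \<open>If the normal closure of \<open>e\<close> in the diagonal kernel contains \<open>\<rho>\<^sup>2\<close> and \<open>(\<rho>\<tau>)\<^sup>r\<close>, it has index at
  most \<open>2r\<close> in \<open>diag\<close>; being the graph of a map on a subgroup of \<open>K\<^sub>1\<close>, it has at most \<open>|K\<^sub>1|\<close>
  elements, so \<open>|diag| \<le> |G\<^sub>1|\<close>.\<close>

lemma relators_subset_if_diag_span: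
  assumes e: "e \<in> diag_kernel" and e1: "fst e \<noteq> \<one>\<^bsub>G1\<^esub>"
    and ca: "conj_by diag (a1, a2) e \<in> diag_span e" and cb: "conj_by diag (b1, b2) e \<in> diag_span e"
    and u: "(a1, a2) \<otimes>\<^bsub>diag\<^esub> (a1, a2) \<in> diag_span e"
    and v: "((a1, a2) \<otimes>\<^bsub>diag\<^esub> (b1, b2)) [^]\<^bsub>diag\<^esub> r \<in> diag_span e"
  shows "relators G1 a1 b1 \<subseteq> relators G2 a2 b2"
proof (rule relators_subset_if_card_diag_le)
  interpret T: abelian_by_dihedral diag "(a1, a2)" "(b1, b2)" r diag_kernel
    by (rule abelian_by_dihedral_diag)
  have "card diag_carrier \<le> 2 * r * card (diag_span e)"
    using T.card_le_dihedral_index[OF T.finite_carrier T.carrier_eq_range T.gens_closed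
        T.tau_involution T.orbit_span_normal[OF e ca cb] u v T.r_pos] by simp
  also have "card (diag_span e) = card (fst ` diag_span e)"
    using card_image[OF inj_on_fst_diag_span[OF e e1 ca cb]] by simp
  also have "\<dots> \<le> card K1"
    using T.orbit_prod_in_A[OF e] P1.finite_K by (intro card_mono) (auto simp: diag_kernel_def)
  finally show "card diag_carrier \<le> card (carrier G1)"
    using P1.card_carrier by (simp add: mult_le_mono2)
qed

lemma fixed_by_rotation_iff:
  "(\<forall>y\<in>K1. conj_by G1 (a1 \<otimes>\<^bsub>G1\<^esub> b1) y = y) \<longleftrightarrow> (\<forall>z\<in>K2. conj_by G2 (a2 \<otimes>\<^bsub>G2\<^esub> b2) z = z)"
  by (rule fixed_points_iff_if_intertwined[OF theta_bij])
    (simp_all add: P1.conj_by_in_A theta_conj_rotation)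

lemma fixed_by_rho_iff: "(\<forall>y\<in>K1. conj_by G1 a1 y = y) \<longleftrightarrow> (\<forall>z\<in>K2. conj_by G2 a2 z = z)"
  by (rule fixed_points_iff_if_intertwined[OF theta_bij])
    (simp_all add: P1.conj_by_in_A P1.gens_closed theta_conj_rho)

text \<open>Whether \<open>\<rho>\<^sup>2\<close> or \<open>(\<rho>\<tau>)\<^sup>r\<close> generates the relevant part of the diagonal kernel depends on how \<open>\<rho>\<close>
  and the rotation act on the kernels; the intertwiner \<open>\<theta>\<close> makes this the same in both factors.\<close>

lemma diag_span_rho_square_or_rotation_pow:
  defines "u \<equiv> (a1, a2) \<otimes>\<^bsub>diag\<^esub> (a1, a2)" and "v \<equiv> ((a1, a2) \<otimes>\<^bsub>diag\<^esub> (b1, b2)) [^]\<^bsub>diag\<^esub> r"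
  shows "(v \<in> diag_span u \<and> fst u \<noteq> \<one>\<^bsub>G1\<^esub>) \<or> (u = \<one>\<^bsub>diag\<^esub> \<and> fst v \<noteq> \<one>\<^bsub>G1\<^esub>)"
proof -
  interpret T: abelian_by_dihedral diag "(a1, a2)" "(b1, b2)" r diag_kernel
    by (rule abelian_by_dihedral_diag)
  have u_eq: "u = (a1 \<otimes>\<^bsub>G1\<^esub> a1, a2 \<otimes>\<^bsub>G2\<^esub> a2)" by (simp add: u_def mult_diag)
  have v_eq: "v = ((a1 \<otimes>\<^bsub>G1\<^esub> b1) [^]\<^bsub>G1\<^esub> r, (a2 \<otimes>\<^bsub>G2\<^esub> b2) [^]\<^bsub>G2\<^esub> r)"
    by (simp add: v_def rotation_diag pow_diag)
  note nontrivial = P1.rho_square_or_rotation_pow_nontrivial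
  show ?thesis
  proof (cases "\<forall>y\<in>K1. conj_by G1 (a1 \<otimes>\<^bsub>G1\<^esub> b1) y = y")
    case False
    then have "v = \<one>\<^bsub>diag\<^esub>"
      using fixed_by_rotation_iff P1.rotation_pow_eq_one_if_not_fixed P2.rotation_pow_eq_one_if_not_fixed
      by (simp add: v_eq)
    then have "v \<in> diag_span u" by (metis orbit_prod.simps(1) rangeI)
    moreover have "fst u \<noteq> \<one>\<^bsub>G1\<^esub>"
      using nontrivial \<open>v = \<one>\<^bsub>diag\<^esub>\<close> by (simp add: u_eq v_eq)
    ultimately show ?thesis by blast
  next
    case fixed1: True
    then have fixed2: "\<forall>z\<in>K2. conj_by G2 (a2 \<otimes>\<^bsub>G2\<^esub> b2) z = z" using fixed_by_rotation_iff by simp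
    show ?thesis
    proof (cases "\<forall>y\<in>K1. conj_by G1 a1 y = y")
      case True
      define c where "c = r * ((p + 1) div 2)"
      have v1: "(a1 \<otimes>\<^bsub>G1\<^esub> b1) [^]\<^bsub>G1\<^esub> r = (a1 \<otimes>\<^bsub>G1\<^esub> a1) [^]\<^bsub>G1\<^esub> c"
        and "(a2 \<otimes>\<^bsub>G2\<^esub> b2) [^]\<^bsub>G2\<^esub> r = (a2 \<otimes>\<^bsub>G2\<^esub> a2) [^]\<^bsub>G2\<^esub> c"
        using P1.rotation_pow_eq_rho_square_pow[OF _ _ P1.K_exponent P1.odd_p]
          P2.rotation_pow_eq_rho_square_pow[OF _ _ P2.K_exponent P2.odd_p]
          fixed1 fixed2 True fixed_by_rho_iff by (simp_all add: c_def)
      then have v_pow: "v = u [^]\<^bsub>diag\<^esub> c" by (simp add: u_eq v_eq pow_diag)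
      have "u \<in> diag_carrier" using T.rho_square_in_A by (simp add: u_def diag_kernel_def)
      then have "orbit_prod diag ((a1, a2) \<otimes>\<^bsub>diag\<^esub> (b1, b2)) u (replicate c 0) = v"
        using T.orbit_prod_replicate_0[OF T.rotation_closed] by (simp add: v_pow)
      then have "v \<in> diag_span u" by (metis rangeI)
      moreover have "fst u \<noteq> \<one>\<^bsub>G1\<^esub>" using nontrivial v1 by (auto simp: u_eq)
      ultimately show ?thesis by blast
    next
      case False
      then have "a1 \<otimes>\<^bsub>G1\<^esub> a1 = \<one>\<^bsub>G1\<^esub>" "a2 \<otimes>\<^bsub>G2\<^esub> a2 = \<one>\<^bsub>G2\<^esub>"
        using fixed1 fixed2 fixed_by_rho_iff
          P1.rho_square_eq_one_if_not_fixed P2.rho_square_eq_one_if_not_fixed by auto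
      then show ?thesis using nontrivial by (simp add: u_eq v_eq)
    qed
  qed
qed

lemma relators_subset: "relators G1 a1 b1 \<subseteq> relators G2 a2 b2"
proof -
  interpret T: abelian_by_dihedral diag "(a1, a2)" "(b1, b2)" r diag_kernel
    by (rule abelian_by_dihedral_diag)
  consider (rho_square) "((a1, a2) \<otimes>\<^bsub>diag\<^esub> (b1, b2)) [^]\<^bsub>diag\<^esub> r \<in> diag_span ((a1, a2) \<otimes>\<^bsub>diag\<^esub> (a1, a2))"
      "fst ((a1, a2) \<otimes>\<^bsub>diag\<^esub> (a1, a2)) \<noteq> \<one>\<^bsub>G1\<^esub>"
    | (rotation_pow) "(a1, a2) \<otimes>\<^bsub>diag\<^esub> (a1, a2) = \<one>\<^bsub>diag\<^esub>"
      "fst (((a1, a2) \<otimes>\<^bsub>diag\<^esub> (b1, b2)) [^]\<^bsub>diag\<^esub> r) \<noteq> \<one>\<^bsub>G1\<^esub>"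
    using diag_span_rho_square_or_rotation_pow by blast
  then show ?thesis
  proof cases
    case rho_square
    then show ?thesis
      using relators_subset_if_diag_span[OF T.rho_square_in_A] T.rho_square_orbit_span by simp
  next
    case rotation_pow
    then show ?thesis
      using relators_subset_if_diag_span[OF T.rotation_pow_in_A] T.rotation_pow_orbit_span
      by (simp del: one_diag)
  qed
qed

end

lemma (in kernel_iso) kernel_iso_inv: "kernel_iso G2 a2 b2 r K2 G1 a1 b1 K1 p (inv_into K1 \<theta>)"
proof -
  interpret inv: diagonal_pair G2 a2 b2 r K2 G1 a1 b1 K1 p by unfold_locales
  have bij: "bij_betw (inv_into K1 \<theta>) K2 K1" by (rule bij_betw_inv_into[OF theta_bij])
  have K1_inv: "inv_into K1 \<theta> z \<in> K1" and theta_inv: "\<theta> (inv_into K1 \<theta> z) = z" if "z \<in> K2" for z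
    using that bij theta_bij by (auto simp: bij_betw_def f_inv_into_f)
  have inv_theta: "inv_into K1 \<theta> (\<theta> y) = y" if "y \<in> K1" for y
    using that theta_bij by (simp add: bij_betw_def inv_into_f_f)
  have transfer: "inv_into K1 \<theta> (f2 z) = f1 (inv_into K1 \<theta> z)"
    if "z \<in> K2" "f1 (inv_into K1 \<theta> z) \<in> K1" "\<theta> (f1 (inv_into K1 \<theta> z)) = f2 z" for f1 f2 z
    using that inv_theta by metis
  show ?thesis
  proof (unfold_locales)
    show "bij_betw (inv_into K1 \<theta>) K2 K1" by (rule bij)
    fix y z assume yz: "y \<in> K2" "z \<in> K2"
    show "inv_into K1 \<theta> (y \<otimes>\<^bsub>G2\<^esub> z) = inv_into K1 \<theta> y \<otimes>\<^bsub>G1\<^esub> inv_into K1 \<theta> z"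
      using transfer[of "y \<otimes>\<^bsub>G2\<^esub> z" "\<lambda>_. inv_into K1 \<theta> y \<otimes>\<^bsub>G1\<^esub> inv_into K1 \<theta> z"] yz K1_inv theta_inv
        theta_mult P1.A_subgroup P2.A_subgroup by (simp add: subgroup.m_closed)
  next
    fix y assume y: "y \<in> K2"
    show "inv_into K1 \<theta> (conj_by G2 a2 y) = conj_by G1 a1 (inv_into K1 \<theta> y)"
      using transfer[OF y, of "conj_by G1 a1"] K1_inv[OF y] theta_inv[OF y] theta_conj_rho
        P1.conj_by_in_A P1.gens_closed by simp
    show "inv_into K1 \<theta> (conj_by G2 b2 y) = conj_by G1 b1 (inv_into K1 \<theta> y)"
      using transfer[OF y, of "conj_by G1 b1"] K1_inv[OF y] theta_inv[OF y] theta_conj_tau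
        P1.conj_by_in_A P1.gens_closed by simp
  qed
qed

lemma (in kernel_iso) relators_eq: "relators G1 a1 b1 = relators G2 a2 b2"
  using relators_subset kernel_iso.relators_subset[OF kernel_iso_inv] by blast

section \<open>Relators of irreducible presentations are prime\<close>

definition conj_closed_words :: "word set \<Rightarrow> bool" where
  "conj_closed_words S \<longleftrightarrow> [] \<in> S \<and> (\<forall>w\<in>S. \<forall>w'\<in>S. w @ w' \<in> S) \<and> (\<forall>w\<in>S. inv_word w \<in> S) \<and>
     (\<forall>c. \<forall>w\<in>S. [c] @ w @ inv_word [c] \<in> S)"

lemma conj_closed_words_Inter:
  "(\<And>i. i \<in> I \<Longrightarrow> conj_closed_words (S i)) \<Longrightarrow> conj_closed_words (\<Inter>i\<in>I. S i)"
  by (simp add: conj_closed_words_def)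

lemma conj_closed_words_Int:
  "conj_closed_words S \<Longrightarrow> conj_closed_words T \<Longrightarrow> conj_closed_words (S \<inter> T)"
  by (simp add: conj_closed_words_def)

context group
begin

lemma eval_conj_word:
  "a \<in> carrier G \<Longrightarrow> b \<in> carrier G \<Longrightarrow>
     eval_word G a b ([c] @ w @ inv_word [c]) = conj_by G (letter G a b c) (eval_word G a b w)"
  by (simp add: eval_word_append eval_inv_word letter_closed eval_word_closed conj_by_def m_assoc)

lemma conj_closed_words_preimage:
  assumes ab: "a \<in> carrier G" "b \<in> carrier G" and N: "N \<lhd> G"
  shows "conj_closed_words {w. eval_word G a b w \<in> N}"
proof -
  interpret N: normal N G by (rule N)
  have "eval_word G a b ([c] @ w @ inv_word [c]) \<in> N" if "eval_word G a b w \<in> N" for c w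
    unfolding eval_conj_word[OF ab] conj_by_def
      by (rule N.inv_op_closed2[OF letter_closed[OF ab] that])
  then show ?thesis
    using ab by (auto simp: conj_closed_words_def eval_word_append eval_inv_word
        simp del: append.simps append_Cons)
qed

lemma normal_eval_image:
  assumes fin: "finite (carrier G)" and gen: "carrier G = range (eval_word G a b)"
    and ab: "a \<in> carrier G" "b \<in> carrier G" and S: "conj_closed_words S"
  shows "eval_word G a b ` S \<lhd> G"
proof (rule normal_if_conj_closed_generators[OF fin gen ab])
  show "subgroup (eval_word G a b ` S) G"
  proof (rule subgroupI)
    show "eval_word G a b ` S \<subseteq> carrier G" using ab eval_word_closed by auto
    show "eval_word G a b ` S \<noteq> {}" using S by (auto simp: conj_closed_words_def)
    show "inv y \<in> eval_word G a b ` S" if "y \<in> eval_word G a b ` S" for y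
      using that S ab by (auto simp: conj_closed_words_def eval_inv_word[symmetric])
    show "y \<otimes> z \<in> eval_word G a b ` S" if "y \<in> eval_word G a b ` S" "z \<in> eval_word G a b ` S" for y z
      using that S ab by (auto simp: conj_closed_words_def eval_word_append[symmetric])
  qed
  have conj_letter: "g \<otimes> l \<otimes> inv g \<in> eval_word G a b ` S"
    if l: "l \<in> eval_word G a b ` S" and g: "g = letter G a b c" for g l c
  proof -
    obtain w where w: "w \<in> S" "l = eval_word G a b w" using l by auto
    then have "[c] @ w @ inv_word [c] \<in> S" using S unfolding conj_closed_words_def by blast
    moreover have "eval_word G a b ([c] @ w @ inv_word [c]) = g \<otimes> l \<otimes> inv g"
      by (simp only: eval_conj_word[OF ab] conj_by_def g w(2))
    ultimately show ?thesis by (metis image_eqI)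
  qed
  show "\<And>l. l \<in> eval_word G a b ` S \<Longrightarrow> a \<otimes> l \<otimes> inv a \<in> eval_word G a b ` S"
    using conj_letter[where g = a and c = "(False, False)"] by (simp add: letter_def)
  show "\<And>l. l \<in> eval_word G a b ` S \<Longrightarrow> b \<otimes> l \<otimes> inv b \<in> eval_word G a b ` S"
    using conj_letter[where g = b and c = "(True, False)"] by (simp add: letter_def)
qed

end

lemma (in irreducible_presentation) eval_image_eq_K:
  assumes "conj_closed_words S" "eval_word G a b ` S \<subseteq> K" "eval_word G a b ` S \<noteq> {\<one>}"
  shows "eval_word G a b ` S = K"
  using K_minimal[OF normal_eval_image[OF finite_carrier carrier_eq_range gens_closed assms(1)] assms(2)]
    assms(3) by blast

text \<open>A conjugation-closed set of words taking values in both kernels, on which triviality in \<open>G\<^sub>1\<close>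
  forces triviality in \<open>G\<^sub>2\<close>, induces \<open>eval\<^sub>1 w \<mapsto> eval\<^sub>2 w\<close>; by irreducibility this is an equivariant
  isomorphism \<open>K\<^sub>1 \<cong> K\<^sub>2\<close> as soon as it is nonzero.\<close>

locale word_correspondence = diagonal_pair +
  fixes S :: "word set"
  assumes S_closed: "conj_closed_words S"
    and S_K1: "eval_word G1 a1 b1 ` S \<subseteq> K1" and S_K2: "eval_word G2 a2 b2 ` S \<subseteq> K2"
    and S_kernel: "\<And>w. w \<in> S \<Longrightarrow> eval_word G1 a1 b1 w = \<one>\<^bsub>G1\<^esub> \<Longrightarrow> eval_word G2 a2 b2 w = \<one>\<^bsub>G2\<^esub>"
    and S_nontrivial: "\<exists>w\<in>S. eval_word G2 a2 b2 w \<noteq> \<one>\<^bsub>G2\<^esub>"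
begin

definition word_map where
  "word_map y = eval_word G2 a2 b2 (SOME w. w \<in> S \<and> eval_word G1 a1 b1 w = y)"

lemma S_append: "w \<in> S \<Longrightarrow> w' \<in> S \<Longrightarrow> w @ w' \<in> S"
  and S_quotient: "w \<in> S \<Longrightarrow> w' \<in> S \<Longrightarrow> inv_word w' @ w \<in> S"
  and S_conj: "w \<in> S \<Longrightarrow> [c] @ w @ inv_word [c] \<in> S"
  using S_closed unfolding conj_closed_words_def by blast+

lemma eval_eq_imp_eval_eq:
  assumes "w \<in> S" "w' \<in> S" "eval_word G1 a1 b1 w = eval_word G1 a1 b1 w'"
  shows "eval_word G2 a2 b2 w = eval_word G2 a2 b2 w'"
  using assms S_kernel[OF S_quotient] P1.eval_word_eq_iff[OF P1.gens_closed]
    P2.eval_word_eq_iff[OF P2.gens_closed] by blast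

lemma word_map_eval: "w \<in> S \<Longrightarrow> word_map (eval_word G1 a1 b1 w) = eval_word G2 a2 b2 w"
proof -
  assume w: "w \<in> S"
  let ?w = "SOME w'. w' \<in> S \<and> eval_word G1 a1 b1 w' = eval_word G1 a1 b1 w"
  have "\<exists>w'. w' \<in> S \<and> eval_word G1 a1 b1 w' = eval_word G1 a1 b1 w" using w by blast
  then have "?w \<in> S \<and> eval_word G1 a1 b1 ?w = eval_word G1 a1 b1 w" by (rule someI_ex)
  then have "eval_word G2 a2 b2 ?w = eval_word G2 a2 b2 w"
    using eval_eq_imp_eval_eq[OF _ w] by (elim conjE)
  then show ?thesis by (simp add: word_map_def)
qed

lemma eval_image_eq_K1: "eval_word G1 a1 b1 ` S = K1"
proof -
  obtain w0 where "w0 \<in> S" "eval_word G2 a2 b2 w0 \<noteq> \<one>\<^bsub>G2\<^esub>" using S_nontrivial by blast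
  then have "eval_word G1 a1 b1 w0 \<noteq> \<one>\<^bsub>G1\<^esub>" using S_kernel by blast
  then show ?thesis using P1.eval_image_eq_K[OF S_closed S_K1] \<open>w0 \<in> S\<close> by blast
qed

lemma K1_eval: "y \<in> K1 \<Longrightarrow> \<exists>w\<in>S. y = eval_word G1 a1 b1 w"
  using eval_image_eq_K1 by blast

lemma word_map_image: "word_map ` K1 = K2"
proof -
  have "word_map ` K1 = (\<lambda>w. word_map (eval_word G1 a1 b1 w)) ` S"
    by (simp add: eval_image_eq_K1[symmetric] image_image)
  also have "\<dots> = eval_word G2 a2 b2 ` S" by (rule image_cong) (simp_all add: word_map_eval)
  also have "\<dots> = K2" using P2.eval_image_eq_K[OF S_closed S_K2] S_nontrivial by blast
  finally show ?thesis .
qed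

text \<open>The words of \<open>S\<close> that are relators of \<open>G\<^sub>2\<close> map into a proper normal subgroup of \<open>G\<^sub>1\<close> inside \<open>K\<^sub>1\<close>,
  which must be trivial.\<close>

lemma inj_on_word_map: "inj_on word_map K1"
proof -
  define Z where "Z = {w \<in> S. eval_word G2 a2 b2 w = \<one>\<^bsub>G2\<^esub>}"
  have "Z = S \<inter> {w. eval_word G2 a2 b2 w \<in> {\<one>\<^bsub>G2\<^esub>}}" by (auto simp: Z_def)
  then have Z_closed: "conj_closed_words Z"
    using conj_closed_words_Int[OF S_closed
        P2.conj_closed_words_preimage[OF P2.gens_closed P2.one_is_normal]]
    by simp
  have Z_sub: "eval_word G1 a1 b1 ` Z \<subseteq> K1" using S_K1 by (auto simp: Z_def)
  have "eval_word G1 a1 b1 ` Z \<noteq> K1"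
  proof
    assume "eval_word G1 a1 b1 ` Z = K1"
    obtain w0 where w0: "w0 \<in> S" "eval_word G2 a2 b2 w0 \<noteq> \<one>\<^bsub>G2\<^esub>" using S_nontrivial by blast
    have "eval_word G1 a1 b1 w0 \<in> K1" using S_K1 w0(1) by blast
    with \<open>eval_word G1 a1 b1 ` Z = K1\<close>
    obtain w where w: "w \<in> Z" "eval_word G1 a1 b1 w0 = eval_word G1 a1 b1 w" by (metis imageE)
    then have "w \<in> S" "eval_word G2 a2 b2 w = \<one>\<^bsub>G2\<^esub>" by (simp_all add: Z_def)
    moreover have "eval_word G2 a2 b2 w0 = eval_word G2 a2 b2 w"
      by (rule eval_eq_imp_eval_eq[OF w0(1) \<open>w \<in> S\<close> w(2)])
    ultimately show False using w0(2) by simp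
  qed
  then have Z1: "eval_word G1 a1 b1 ` Z = {\<one>\<^bsub>G1\<^esub>}"
    using P1.eval_image_eq_K[OF Z_closed Z_sub] by blast
  show ?thesis
  proof (rule inj_onI)
    fix y y' assume y: "y \<in> K1" "y' \<in> K1" "word_map y = word_map y'"
    obtain w where w: "w \<in> S" "y = eval_word G1 a1 b1 w" using K1_eval y(1) by blast
    obtain w' where w': "w' \<in> S" "y' = eval_word G1 a1 b1 w'" using K1_eval y(2) by blast
    have "eval_word G2 a2 b2 w = eval_word G2 a2 b2 w'" using y(3) w w' word_map_eval by simp
    then have "inv_word w' @ w \<in> Z"
      using S_quotient[OF w(1) w'(1)] P2.eval_word_eq_iff[OF P2.gens_closed] by (simp add: Z_def)
    then show "y = y'" using Z1 w w' P1.eval_word_eq_iff[OF P1.gens_closed] by blast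
  qed
qed

lemma word_map_conj_letter:
  assumes "y \<in> K1"
  shows "word_map (conj_by G1 (letter G1 a1 b1 c) y) = conj_by G2 (letter G2 a2 b2 c) (word_map y)"
proof -
  obtain w where w: "w \<in> S" "y = eval_word G1 a1 b1 w" using K1_eval assms by blast
  have "conj_by G1 (letter G1 a1 b1 c) y = eval_word G1 a1 b1 ([c] @ w @ inv_word [c])"
    by (simp only: P1.eval_conj_word[OF P1.gens_closed] w(2))
  then have "word_map (conj_by G1 (letter G1 a1 b1 c) y) = eval_word G2 a2 b2 ([c] @ w @ inv_word [c])"
    using word_map_eval[OF S_conj[OF w(1)]] by (simp only:)
  also have "\<dots> = conj_by G2 (letter G2 a2 b2 c) (word_map y)"
    by (simp only: P2.eval_conj_word[OF P2.gens_closed] word_map_eval[OF w(1)] w(2))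
  finally show ?thesis .
qed

sublocale kernel_iso G1 a1 b1 r K1 G2 a2 b2 K2 p word_map
proof
  show "bij_betw word_map K1 K2" using inj_on_word_map word_map_image by (simp add: bij_betw_def)
  fix y z assume "y \<in> K1" "z \<in> K1"
  then obtain w w' where w: "w \<in> S" "y = eval_word G1 a1 b1 w" and w': "w' \<in> S" "z = eval_word G1 a1 b1 w'"
    using K1_eval by blast
  have "y \<otimes>\<^bsub>G1\<^esub> z = eval_word G1 a1 b1 (w @ w')"
    by (simp add: P1.eval_word_append[OF P1.gens_closed] w w')
  then have "word_map (y \<otimes>\<^bsub>G1\<^esub> z) = eval_word G2 a2 b2 (w @ w')"
    using word_map_eval S_append[OF w(1) w'(1)] by simp
  then show "word_map (y \<otimes>\<^bsub>G1\<^esub> z) = word_map y \<otimes>\<^bsub>G2\<^esub> word_map z"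
    by (simp add: P2.eval_word_append[OF P2.gens_closed] word_map_eval w w')
next
  fix y assume "y \<in> K1"
  from word_map_conj_letter[OF this, of "(False, False)"] word_map_conj_letter[OF this, of "(True, False)"]
  show "word_map (conj_by G1 a1 y) = conj_by G2 a2 (word_map y)"
    "word_map (conj_by G1 b1 y) = conj_by G2 b2 (word_map y)"
    by (simp_all add: letter_def)
qed

end

context group
begin

lemma eval_word_rho_square:
  "a \<in> carrier G \<Longrightarrow> eval_word G a b [(False, False), (False, False)] = a \<otimes> a"
  by (simp add: letter_def)

lemma eval_word_rotation_pow:
  "a \<in> carrier G \<Longrightarrow> b \<in> carrier G \<Longrightarrow>
     eval_word G a b (concat (replicate n [(False, False), (True, False)])) = (a \<otimes> b) [^] n"
  by (simp add: eval_word_concat_replicate letter_def)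

end

locale presentation_family =
  fixes m :: nat and G :: "nat \<Rightarrow> ('a, 'c) monoid_scheme" and a b :: "nat \<Rightarrow> 'a"
    and r :: nat and K :: "nat \<Rightarrow> 'a set" and p :: nat
  assumes presentation: "\<And>i. i < m \<Longrightarrow> irreducible_presentation (G i) (a i) (b i) r (K i) p"
begin

definition kernel_words :: "nat \<Rightarrow> word set" where
  "kernel_words k = (\<Inter>i<m. {w. eval_word (G i) (a i) (b i) w \<in> (if i < k then {\<one>\<^bsub>G i\<^esub>} else K i)})"

lemma conj_closed_kernel_words: "conj_closed_words (kernel_words k)"
  unfolding kernel_words_def
proof (rule conj_closed_words_Inter)
  fix i assume "i \<in> {..<m}"
  then interpret Pi: irreducible_presentation "G i" "a i" "b i" r "K i" p
    by (simp add: presentation)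
  show "conj_closed_words {w. eval_word (G i) (a i) (b i) w \<in> (if i < k then {\<one>\<^bsub>G i\<^esub>} else K i)}"
    using Pi.conj_closed_words_preimage[OF Pi.gens_closed] Pi.one_is_normal Pi.normal_A by simp
qed

lemma kernel_words_eval:
  "w \<in> kernel_words k \<Longrightarrow> i < m \<Longrightarrow> eval_word (G i) (a i) (b i) w \<in> (if i < k then {\<one>\<^bsub>G i\<^esub>} else K i)"
  unfolding kernel_words_def by blast

lemma kernel_words_eval_K:
  assumes "w \<in> kernel_words k" "i < m"
  shows "eval_word (G i) (a i) (b i) w \<in> K i"
proof -
  interpret Pi: irreducible_presentation "G i" "a i" "b i" r "K i" p
    using presentation[OF assms(2)] .
  show ?thesis
    using kernel_words_eval[OF assms] Pi.A_subgroup
    by (auto simp: subgroup.one_closed split: if_splits)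
qed

lemma kernel_words_Suc:
  assumes "w \<in> kernel_words k" "eval_word (G k) (a k) (b k) w = \<one>\<^bsub>G k\<^esub>"
  shows "w \<in> kernel_words (Suc k)"
  unfolding kernel_words_def
proof (intro INT_I CollectI)
  fix i assume "i \<in> {..<m}"
  then show "eval_word (G i) (a i) (b i) w \<in> (if i < Suc k then {\<one>\<^bsub>G i\<^esub>} else K i)"
    using kernel_words_eval[OF assms(1)] assms(2) by (cases "i = k") (auto simp: less_Suc_eq)
qed

lemma kernel_words_relators: "kernel_words m \<subseteq> (\<Inter>i<m. relators (G i) (a i) (b i))"
  by (auto simp: kernel_words_def relators_def)

lemma concat_replicate_kernel_word:
  assumes "w \<in> kernel_words k"
  shows "concat (replicate p w) \<in> (\<Inter>i<m. relators (G i) (a i) (b i))"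
proof -
  have "eval_word (G i) (a i) (b i) (concat (replicate p w)) = \<one>\<^bsub>G i\<^esub>" if "i < m" for i
  proof -
    interpret Pi: irreducible_presentation "G i" "a i" "b i" r "K i" p using presentation[OF that] .
    show ?thesis using kernel_words_eval_K[OF assms that] Pi.K_exponent
      by (simp add: Pi.eval_word_concat_replicate[OF Pi.gens_closed])
  qed
  then show ?thesis by (simp add: relators_def)
qed

lemma generator_words_kernel_words:
  "[(False, False), (False, False)] \<in> kernel_words 0"
  "concat (replicate r [(False, False), (True, False)]) \<in> kernel_words 0"
proof -
  have "eval_word (G i) (a i) (b i) [(False, False), (False, False)] \<in> K i"
    "eval_word (G i) (a i) (b i) (concat (replicate r [(False, False), (True, False)])) \<in> K i"
    if "i < m" for i
  proof -
    interpret Pi: irreducible_presentation "G i" "a i" "b i" r "K i" p using presentation[OF that] .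
    show "eval_word (G i) (a i) (b i) [(False, False), (False, False)] \<in> K i"
      "eval_word (G i) (a i) (b i) (concat (replicate r [(False, False), (True, False)])) \<in> K i"
      using Pi.eval_word_rho_square[OF Pi.gens_closed(1), of "b i"] Pi.rho_square_in_A
        Pi.eval_word_rotation_pow[OF Pi.gens_closed, of r] Pi.rotation_pow_in_A
      by simp_all
  qed
  then show "[(False, False), (False, False)] \<in> kernel_words 0"
    "concat (replicate r [(False, False), (True, False)]) \<in> kernel_words 0"
    by (auto simp: kernel_words_def)
qed

text \<open>At the first \<open>k\<close> for which \<open>kernel_words (Suc k)\<close> consists of relators of \<open>Q\<close> but
  \<open>kernel_words k\<close> does not, the words of \<open>kernel_words k\<close> identify \<open>K\<^sub>k\<close> with \<open>K\<^sub>Q\<close>.\<close>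

lemma relators_eq_if_Inter_relators_subset:
  fixes GQ :: "('b, 'd) monoid_scheme"
  assumes PQ: "irreducible_presentation GQ aQ bQ r KQ p"
    and incl: "(\<Inter>i<m. relators (G i) (a i) (b i)) \<subseteq> relators GQ aQ bQ"
  shows "\<exists>k<m. relators (G k) (a k) (b k) = relators GQ aQ bQ"
proof -
  interpret Q: irreducible_presentation GQ aQ bQ r KQ p by (rule PQ)
  define P where "P k \<longleftrightarrow> kernel_words k \<subseteq> relators GQ aQ bQ" for k
  have "P m" using kernel_words_relators incl by (simp add: P_def)
  moreover have "\<not> P 0"
  proof
    assume "P 0"
    then have "eval_word GQ aQ bQ [(False, False), (False, False)] = \<one>\<^bsub>GQ\<^esub>"
      "eval_word GQ aQ bQ (concat (replicate r [(False, False), (True, False)])) = \<one>\<^bsub>GQ\<^esub>"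
      using generator_words_kernel_words by (auto simp: P_def relators_def)
    then show False
      using Q.rho_square_or_rotation_pow_nontrivial Q.eval_word_rho_square[OF Q.gens_closed(1), of bQ]
        Q.eval_word_rotation_pow[OF Q.gens_closed, of r] by simp
  qed
  ultimately obtain k where k: "k < m" "\<not> P k" "P (Suc k)"
    using ex_least_nat_less[of P m] by blast
  interpret word_correspondence "G k" "a k" "b k" r "K k" GQ aQ bQ KQ p "kernel_words k"
  proof (intro word_correspondence.intro word_correspondence_axioms.intro diagonal_pair.intro
      presentation[OF k(1)] PQ conj_closed_kernel_words)
    show "eval_word (G k) (a k) (b k) ` kernel_words k \<subseteq> K k"
      using kernel_words_eval_K k(1) by blast
    show "eval_word GQ aQ bQ ` kernel_words k \<subseteq> KQ"
    proof
      fix z assume "z \<in> eval_word GQ aQ bQ ` kernel_words k"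
      then obtain w where w: "w \<in> kernel_words k" "z = eval_word GQ aQ bQ w" by blast
      then have "z [^]\<^bsub>GQ\<^esub> p = \<one>\<^bsub>GQ\<^esub>"
        using concat_replicate_kernel_word[OF w(1)] incl Q.eval_word_concat_replicate[OF Q.gens_closed]
        by (auto simp: relators_def)
      then show "z \<in> KQ"
        using Q.in_normal_if_pow_prime_eq_one[OF Q.finite_carrier Q.normal_A Q.card_carrier Q.coprime_p]
          w(2) Q.eval_word_closed[OF Q.gens_closed] by simp
    qed
    show "eval_word GQ aQ bQ w = \<one>\<^bsub>GQ\<^esub>"
      if "w \<in> kernel_words k" "eval_word (G k) (a k) (b k) w = \<one>\<^bsub>G k\<^esub>" for w
      using kernel_words_Suc[OF that] k(3) by (auto simp: P_def relators_def)
    show "\<exists>w\<in>kernel_words k. eval_word GQ aQ bQ w \<noteq> \<one>\<^bsub>GQ\<^esub>"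
      using k(2) by (auto simp: P_def relators_def)
  qed
  show ?thesis using relators_eq k(1) by blast
qed

end

section \<open>Products of irreducible PX maps\<close>

lemma rmap_relators_prime:
  fixes M :: "nat \<Rightarrow> 'a rmap" and Q :: "'b rmap"
  assumes M: "\<forall>i<m. irreducible_rotary_augmented_PX_map p r (M i)"
    and Q: "irreducible_rotary_augmented_PX_map p r Q"
    and p: "Factorial_Ring.prime p" "odd p" and r: "r \<ge> 3" "\<not> p dvd r"
    and incl: "(\<Inter>i<m. rmap_relators (M i)) \<subseteq> rmap_relators Q"
  shows "\<exists>i<m. rmap_relators (M i) = rmap_relators Q"
proof -
  have "\<exists>K. i < m \<longrightarrow> irreducible_presentation (fst (M i)) (fst (snd (M i))) (snd (snd (M i))) r K p" for i
    using M irreducible_PX_map_presentation[OF _ p r, of "fst (M i)" "fst (snd (M i))" "snd (snd (M i))"]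
    by simp
  then obtain K where K:
    "\<And>i. i < m \<Longrightarrow> irreducible_presentation (fst (M i)) (fst (snd (M i))) (snd (snd (M i))) r (K i) p"
    by metis
  obtain KQ where KQ: "irreducible_presentation (fst Q) (fst (snd Q)) (snd (snd Q)) r KQ p"
    using irreducible_PX_map_presentation[OF _ p r, of "fst Q" "fst (snd Q)" "snd (snd Q)"] Q
    by auto
  have rel: "rmap_relators N = relators (fst N) (fst (snd N)) (snd (snd N))" for N :: "'x rmap"
    by (cases N) (simp add: rmap_relators_def)
  show ?thesis
  proof -
    interpret presentation_family m "\<lambda>i. fst (M i)" "\<lambda>i. fst (snd (M i))" "\<lambda>i. snd (snd (M i))" r K p
      using K by (simp add: presentation_family_def)
    show ?thesis using relators_eq_if_Inter_relators_subset[OF KQ] incl by (simp add: rel)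
  qed
qed

lemma Inter_eq_iff_bij_betw:
  fixes A B :: "nat \<Rightarrow> 'x set"
  assumes inj: "inj_on A {..<m}" "inj_on B {..<n}"
    and primeA: "\<And>i. i < m \<Longrightarrow> (\<Inter>j<n. B j) \<subseteq> A i \<Longrightarrow> \<exists>j<n. B j = A i"
    and primeB: "\<And>j. j < n \<Longrightarrow> (\<Inter>i<m. A i) \<subseteq> B j \<Longrightarrow> \<exists>i<m. A i = B j"
  shows "(\<Inter>i<m. A i) = (\<Inter>j<n. B j) \<longleftrightarrow> m = n \<and> (\<exists>\<sigma>. bij_betw \<sigma> {..<n} {..<n} \<and> (\<forall>i<n. A i = B (\<sigma> i)))"
proof
  assume eq: "(\<Inter>i<m. A i) = (\<Inter>j<n. B j)"
  define f where "f i = (SOME j. j < n \<and> B j = A i)" for i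
  have f: "f i < n \<and> B (f i) = A i" if "i < m" for i
  proof -
    have "\<exists>j. j < n \<and> B j = A i" using primeA[OF that] eq that by blast
    then show ?thesis unfolding f_def by (rule someI_ex)
  qed
  define g where "g j = (SOME i. i < m \<and> A i = B j)" for j
  have g: "g j < m \<and> A (g j) = B j" if "j < n" for j
  proof -
    have "\<exists>i. i < m \<and> A i = B j" using primeB[OF that] eq that by blast
    then show ?thesis unfolding g_def by (rule someI_ex)
  qed
  have "inj_on f {..<m}"
  proof (rule inj_onI)
    fix x y assume "x \<in> {..<m}" "y \<in> {..<m}" "f x = f y"
    then have "A x = A y" using f[of x] f[of y] by simp
    then show "x = y" using inj(1) \<open>x \<in> {..<m}\<close> \<open>y \<in> {..<m}\<close> by (simp add: inj_on_def)
  qed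
  then have "m \<le> n" using card_inj_on_le[of f "{..<m}" "{..<n}"] f by auto
  moreover have "inj_on g {..<n}"
  proof (rule inj_onI)
    fix x y assume "x \<in> {..<n}" "y \<in> {..<n}" "g x = g y"
    then have "B x = B y" using g[of x] g[of y] by simp
    then show "x = y" using inj(2) \<open>x \<in> {..<n}\<close> \<open>y \<in> {..<n}\<close> by (simp add: inj_on_def)
  qed
  then have "n \<le> m" using card_inj_on_le[of g "{..<n}" "{..<m}"] g by auto
  ultimately have "m = n" by simp
  moreover have "bij_betw f {..<n} {..<n}"
    using \<open>inj_on f {..<m}\<close> f \<open>m = n\<close> by (intro bij_betw_imageI endo_inj_surj) auto
  ultimately show "m = n \<and> (\<exists>\<sigma>. bij_betw \<sigma> {..<n} {..<n} \<and> (\<forall>i<n. A i = B (\<sigma> i)))"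
    using f by auto
next
  assume "m = n \<and> (\<exists>\<sigma>. bij_betw \<sigma> {..<n} {..<n} \<and> (\<forall>i<n. A i = B (\<sigma> i)))"
  then obtain \<sigma> where "m = n" "bij_betw \<sigma> {..<n} {..<n}" "\<forall>i<n. A i = B (\<sigma> i)" by blast
  then have "(\<Inter>i<m. A i) = (\<Inter>i<n. B (\<sigma> i))" by simp
  also have "\<dots> = (\<Inter>j<n. B j)"
    using \<open>bij_betw \<sigma> {..<n} {..<n}\<close>
    by (simp add: bij_betw_def image_image[symmetric] del: image_image)
  finally show "(\<Inter>i<m. A i) = (\<Inter>j<n. B j)" .
qed

lemma rmap_generated_if_irreducible_PX_map:
  "irreducible_rotary_augmented_PX_map p r M \<Longrightarrow> rmap_generated M"
  by (cases M) (simp add: irreducible_rotary_augmented_PX_map_def augmented_PX_map_def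
      rotary_datum_imp_rmap_generated)

theorem theorem6p8:
  fixes p r m n :: nat
    and M :: "nat \<Rightarrow> 'a rmap" and N :: "nat \<Rightarrow> 'b rmap"
  assumes "Factorial_Ring.prime p" and "odd p" and "r \<ge> 3" and "\<not> p dvd r"
    and "m \<ge> 1" and "n \<ge> 1"
    and "\<forall>i<m. irreducible_rotary_augmented_PX_map p r (M i)"
    and "\<forall>i<n. irreducible_rotary_augmented_PX_map p r (N i)"
    and "\<forall>i<m. \<forall>j<m. i \<noteq> j \<longrightarrow> \<not> rmap_iso (M i) (M j)"
    and "\<forall>i<n. \<forall>j<n. i \<noteq> j \<longrightarrow> \<not> rmap_iso (N i) (N j)"
  shows "rmap_iso (rmap_prod m M) (rmap_prod n N) \<longleftrightarrow>
           (m = n \<and> (\<exists>\<sigma>. bij_betw \<sigma> {..<n} {..<n} \<and> (\<forall>i<n. rmap_iso (M i) (N (\<sigma> i)))))"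
proof -
  note pr = assms(1-4) and irr = assms(7,8) and distinct = assms(9,10)
  have gen: "\<And>i. i < m \<Longrightarrow> rmap_generated (M i)" "\<And>j. j < n \<Longrightarrow> rmap_generated (N j)"
    using irr rmap_generated_if_irreducible_PX_map by blast+
  let ?A = "\<lambda>i. rmap_relators (M i)" and ?B = "\<lambda>j. rmap_relators (N j)"
  have "rmap_iso (rmap_prod m M) (rmap_prod n N) \<longleftrightarrow> (\<Inter>i<m. ?A i) = (\<Inter>j<n. ?B j)"
    using rmap_iso_iff_relators_eq rmap_prod_generated_relators gen by metis
  also have "\<dots> \<longleftrightarrow> m = n \<and> (\<exists>\<sigma>. bij_betw \<sigma> {..<n} {..<n} \<and> (\<forall>i<n. ?A i = ?B (\<sigma> i)))"
  proof (rule Inter_eq_iff_bij_betw)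
    show "inj_on ?A {..<m}"
      using distinct(1) rmap_iso_iff_relators_eq[OF gen(1) gen(1)] by (auto intro!: inj_onI)
    show "inj_on ?B {..<n}"
      using distinct(2) rmap_iso_iff_relators_eq[OF gen(2) gen(2)] by (auto intro!: inj_onI)
    show "\<exists>j<n. ?B j = ?A i" if "i < m" "(\<Inter>j<n. ?B j) \<subseteq> ?A i" for i
      using rmap_relators_prime[OF irr(2) irr(1)[rule_format, OF that(1)] pr that(2)] .
    show "\<exists>i<m. ?A i = ?B j" if "j < n" "(\<Inter>i<m. ?A i) \<subseteq> ?B j" for j
      using rmap_relators_prime[OF irr(1) irr(2)[rule_format, OF that(1)] pr that(2)] .
  qed
  also have "\<dots> \<longleftrightarrow> m = n \<and> (\<exists>\<sigma>. bij_betw \<sigma> {..<n} {..<n} \<and> (\<forall>i<n. rmap_iso (M i) (N (\<sigma> i))))"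
  proof -
    have "rmap_iso (M i) (N (\<sigma> i)) \<longleftrightarrow> ?A i = ?B (\<sigma> i)"
      if "m = n" "bij_betw \<sigma> {..<n} {..<n}" "i < n" for \<sigma> i
      using rmap_iso_iff_relators_eq[OF gen(1) gen(2)] bij_betw_apply[OF that(2)] that(1,3) by simp
    then show ?thesis by blast
  qed
  finally show ?thesis .
qed

end
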